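(* The linear map $\Phi:\mathit{NCK}\to\mathit{LR}$ defined on ordered forests by $\Phi(f)=M^*_{\varphi(f)}$ is an isomorphism of graded Hopf algebras.
   Context: Trees: $\mathcal{Y}_n$ = rooted planar binary trees with $n$ internal nodes, $\mathcal{Y}_0=\{|\}$; $s\vee t$ = root with left subtree $s$, right subtree $t$; $|\backslash t=t$, $s\backslash t=s_l\vee(s_r\backslash t)$. Tamari order: generated by replacing a subtree $(a\vee b)\vee c$ by the larger $a\vee(b\vee c)$. $\mathcal{Y}Sym$: graded connected Hopf algebra over $\mathbb{Q}$ with basis $F_t$; leaves of $t\in\mathcal{Y}_p$ numbered $0..p$; splitting at leaf $i$: $|\to(|,|)$, $t_l\vee t_r\to(a,b\vee t_r)$ if leaf $i$ in $t_l$ and $t_l\to(a,b)$, $\to(t_l\vee c,d)$ if in $t_r$ and $t_r\to(c,d)$; $\Delta(F_t)=\sum_iF_{t_0}\otimes F_{t_1}$; for $s\in\mathcal{Y}_q$, $F_t\cdot F_s=\sum F_{(t_0,..,t_q)/s}$ over multisets $i_1\le..\le i_q$ of leaves of $t$, the division splitting $t$ at $i_q$ into $(t',t_q)$ and dividing $t'$ at $i_1..i_{q-1}$, and $(t_0,..,t_q)/s$ grafting the root of $t_i$ on leaf $i$ of $s$. $M_t=\sum_{t\le s}\mu_{\mathcal{Y}_n}(t,s)F_s$. $\mathit{LR}$ is the graded dual Hopf algebra of $\mathcal{Y}Sym$, $\{M^*_t\}$ the basis dual to $\{M_t\}$. $\mathit{NCK}$ (non-commutative Connes–Kreimer Hopf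 algebra): the free associative algebra over $\mathbb{Q}$ on the set of finite rooted planar trees; its basis is ordered forests (finite sequences of rooted planar trees), the empty forest is the unit, product is concatenation, degree is the total number of nodes. A set $\mathsf{R}$ of nodes of a forest $f$ is admissible if every descendant of a node in $\mathsf{R}$ is in $\mathsf{R}$; $f'_{\mathsf{R}}$ is the ordered forest of subtrees formed by $\mathsf{R}$ (the subtrees rooted at nodes of $\mathsf{R}$ whose parent is not in $\mathsf{R}$), in left-to-right planar order, and $f''_{\mathsf{R}}$ is the ordered forest remaining after deleting $\mathsf{R}$. Coproduct: $\Delta(f)=\sum_{\mathsf{R}}f'_{\mathsf{R}}\otimes f''_{\mathsf{R}}$ over admissible $\mathsf{R}$. $\varphi$: from ordered forests to planar binary trees: $\varphi(\emptyset)=|$; for a rooted planar tree $T$ whose root has children subtrees forming the forest $f$ (in order), $\varphi(T)=\varphi(f)\vee|$; for $f=(T_1,\dots,T_k)$, $\varphi(f)=\varphi(T_1)\backslash\cdots\backslash\varphi(T_k)$. *)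

theory Defs
  imports Complex_Main
begin

text \<open>An element of a vector space with basis indexed by 'a is represented by its
coefficient function 'a => rat; elements of the (algebraic / graded) space are the
finitely supported ones. Tensor products of such spaces have basis indexed by pairs.\<close>

type_synonym 'a vec = "'a \<Rightarrow> rat"

definition fsupp :: "'a vec \<Rightarrow> bool" where
  "fsupp x \<longleftrightarrow> finite {a. x a \<noteq> 0}"

definition vbasis :: "'a \<Rightarrow> 'a vec" where
  "vbasis a = (\<lambda>b. if b = a then 1 else 0)"

definition lin :: "('a \<Rightarrow> 'b vec) \<Rightarrow> 'a vec \<Rightarrow> 'b vec" where
  "lin g x = (\<lambda>b. \<Sum>a\<in>{a. x a \<noteq> 0}. x a * g a b)"

definition lin2 :: "('a \<Rightarrow> 'b \<Rightarrow> 'c vec) \<Rightarrow> 'a vec \<Rightarrow> 'b vec \<Rightarrow> 'c vec" where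
  "lin2 g x y = (\<lambda>c. \<Sum>a\<in>{a. x a \<noteq> 0}. \<Sum>b\<in>{b. y b \<noteq> 0}. x a * y b * g a b c)"

definition tensor_map :: "('a \<Rightarrow> 'c vec) \<Rightarrow> ('b \<Rightarrow> 'd vec) \<Rightarrow> ('a \<times> 'b) vec \<Rightarrow> ('c \<times> 'd) vec" where
  "tensor_map g h = lin (\<lambda>(a, b). (\<lambda>(c, d). g a c * h b d))"

definition dpair :: "'a vec \<Rightarrow> 'a vec \<Rightarrow> rat" where
  "dpair \<xi> x = (\<Sum>a\<in>{a. x a \<noteq> 0}. \<xi> a * x a)"

definition tpair :: "'a vec \<Rightarrow> 'b vec \<Rightarrow> ('a \<times> 'b) vec \<Rightarrow> rat" where
  "tpair \<xi> \<eta> z = (\<Sum>p\<in>{p. z p \<noteq> 0}. \<xi> (fst p) * \<eta> (snd p) * z p)"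

datatype btree = Leaf | Br btree btree

fun bsize :: "btree \<Rightarrow> nat" where
  "bsize Leaf = 0"
| "bsize (Br l r) = bsize l + bsize r + 1"

fun under :: "btree \<Rightarrow> btree \<Rightarrow> btree" where
  "under Leaf t = t"
| "under (Br l r) t = Br l (under r t)"

text \<open>splitting at leaf i (leaves numbered 0..bsize t from left to right)\<close>
fun ysplit :: "btree \<Rightarrow> nat \<Rightarrow> btree \<times> btree" where
  "ysplit Leaf i = (Leaf, Leaf)"
| "ysplit (Br l r) i =
     (if i \<le> bsize l then (let (a, b) = ysplit l i in (a, Br b r))
      else (let (c, d) = ysplit r (i - bsize l - 1) in (Br l c, d)))"

text \<open>division at leaves given in decreasing order i_q, ..., i_1: split at i_q into
  (t', t_q) and divide t' at the remaining leaves\<close>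
fun ydivide_rev :: "btree \<Rightarrow> nat list \<Rightarrow> btree list" where
  "ydivide_rev t [] = [t]"
| "ydivide_rev t (i # js) = ydivide_rev (fst (ysplit t i)) js @ [snd (ysplit t i)]"

definition ydivide :: "btree \<Rightarrow> nat list \<Rightarrow> btree list" where
  "ydivide t is = ydivide_rev t (rev is)"

text \<open>grafting (t_0,...,t_q)/s : root of t_i grafted onto leaf i of s\<close>
fun graft :: "btree list \<Rightarrow> btree \<Rightarrow> btree" where
  "graft ts Leaf = hd ts"
| "graft ts (Br l r) = Br (graft (take (bsize l + 1) ts) l) (graft (drop (bsize l + 1) ts) r)"

definition multY_basis :: "btree \<Rightarrow> btree \<Rightarrow> btree vec" where
  "multY_basis t s = (\<lambda>u.
     \<Sum>is\<in>{is. length is = bsize s \<and> sorted is \<and> (\<forall>i\<in>set is. i \<le> bsize t)}.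
        vbasis (graft (ydivide t is) s) u)"

definition DeltaY_basis :: "btree \<Rightarrow> (btree \<times> btree) vec" where
  "DeltaY_basis t = (\<lambda>p. \<Sum>i\<in>{0..bsize t}. vbasis (ysplit t i) p)"

definition unitY :: "btree vec" where
  "unitY = vbasis Leaf"

inductive tamari_step :: "btree \<Rightarrow> btree \<Rightarrow> bool" where
  rot: "tamari_step (Br (Br a b) c) (Br a (Br b c))"
| left: "tamari_step l l' \<Longrightarrow> tamari_step (Br l r) (Br l' r)"
| right: "tamari_step r r' \<Longrightarrow> tamari_step (Br l r) (Br l r')"

definition tamari_le :: "btree \<Rightarrow> btree \<Rightarrow> bool" where
  "tamari_le = tamari_step\<^sup>*\<^sup>*"

definition mobius :: "('a \<Rightarrow> 'a \<Rightarrow> bool) \<Rightarrow> 'a \<Rightarrow> 'a \<Rightarrow> int" where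
  "mobius le = (THE m. \<forall>x y. m x y =
      (if x = y then 1
       else if le x y then - (\<Sum>z\<in>{z. le x z \<and> le z y \<and> z \<noteq> y}. m x z)
       else 0))"

text \<open>M_t = sum_{t <= s} mu(t,s) F_s  (Tamari order restricted to Y_n; it only
  relates trees of the same size)\<close>
definition Mbasis :: "btree \<Rightarrow> btree vec" where
  "Mbasis t = (\<lambda>s. if tamari_le t s then of_int (mobius tamari_le t s) else 0)"

text \<open>An element xi of LR is represented by its values xi(t) = <xi, F_t> (i.e. by its
  coefficients in the basis dual to {F_t}); elements of the graded dual are exactly the
  finitely supported such functions.\<close>

definition multLR :: "btree vec \<Rightarrow> btree vec \<Rightarrow> btree vec" where
  "multLR \<xi> \<eta> = (\<lambda>u. tpair \<xi> \<eta> (DeltaY_basis u))"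

definition unitLR :: "btree vec" where
  "unitLR = (\<lambda>u. if u = Leaf then 1 else 0)"

definition DeltaLR :: "btree vec \<Rightarrow> (btree \<times> btree) vec" where
  "DeltaLR \<xi> = (\<lambda>(s, t). dpair \<xi> (multY_basis s t))"

definition counitLR :: "btree vec \<Rightarrow> rat" where
  "counitLR \<xi> = dpair \<xi> unitY"

definition Mdual :: "btree \<Rightarrow> btree vec" where
  "Mdual t = (THE \<xi>. fsupp \<xi> \<and> (\<forall>s. dpair \<xi> (Mbasis s) = (if s = t then 1 else 0)))"

datatype ptree = Node "ptree list"

type_synonym forest = "ptree list"

text \<open>nodes as paths of child indices; fnodes k ts: nodes of the forest ts whose
  trees are numbered from k\<close>
fun tnodes :: "ptree \<Rightarrow> nat list set" and fnodes :: "nat \<Rightarrow> forest \<Rightarrow> nat list set" where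
  "tnodes (Node cs) = insert [] (fnodes 0 cs)"
| "fnodes k [] = {}"
| "fnodes k (t # ts) = Cons k ` tnodes t \<union> fnodes (Suc k) ts"

definition nodes :: "forest \<Rightarrow> nat list set" where
  "nodes f = fnodes 0 f"

definition fdeg :: "forest \<Rightarrow> nat" where
  "fdeg f = card (nodes f)"

definition admissible :: "forest \<Rightarrow> nat list set \<Rightarrow> bool" where
  "admissible f R \<longleftrightarrow> R \<subseteq> nodes f \<and> (\<forall>p\<in>R. \<forall>q. p @ q \<in> nodes f \<longrightarrow> p @ q \<in> R)"

text \<open>f'_R : subtrees rooted at nodes of R whose parent is not in R, left to right\<close>
fun tcutpart :: "nat list set \<Rightarrow> ptree \<Rightarrow> forest" and
    fcutpart :: "nat list set \<Rightarrow> nat \<Rightarrow> forest \<Rightarrow> forest" where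
  "tcutpart R (Node cs) = (if [] \<in> R then [Node cs] else fcutpart R 0 cs)"
| "fcutpart R k [] = []"
| "fcutpart R k (t # ts) = tcutpart {p. k # p \<in> R} t @ fcutpart R (Suc k) ts"

text \<open>f''_R : the forest remaining after deleting the nodes of R\<close>
fun tremain :: "nat list set \<Rightarrow> ptree \<Rightarrow> forest" and
    fremain :: "nat list set \<Rightarrow> nat \<Rightarrow> forest \<Rightarrow> forest" where
  "tremain R (Node cs) = (if [] \<in> R then [] else [Node (fremain R 0 cs)])"
| "fremain R k [] = []"
| "fremain R k (t # ts) = tremain {p. k # p \<in> R} t @ fremain R (Suc k) ts"

definition multN :: "forest vec \<Rightarrow> forest vec \<Rightarrow> forest vec" where
  "multN = lin2 (\<lambda>f g. vbasis (f @ g))"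

definition unitN :: "forest vec" where
  "unitN = vbasis []"

definition DeltaN_basis :: "forest \<Rightarrow> (forest \<times> forest) vec" where
  "DeltaN_basis f = (\<lambda>p. \<Sum>R\<in>{R. admissible f R}. vbasis (fcutpart R 0 f, fremain R 0 f) p)"

definition DeltaN :: "forest vec \<Rightarrow> (forest \<times> forest) vec" where
  "DeltaN = lin DeltaN_basis"

definition counitN :: "forest vec \<Rightarrow> rat" where
  "counitN x = x []"

fun phiT :: "ptree \<Rightarrow> btree" and phiF :: "forest \<Rightarrow> btree" where
  "phiT (Node cs) = Br (phiF cs) Leaf"
| "phiF [] = Leaf"
| "phiF (T # Ts) = under (phiT T) (phiF Ts)"

definition Phi_basis :: "forest \<Rightarrow> btree vec" where
  "Phi_basis f = Mdual (phiF f)"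

definition Phi :: "forest vec \<Rightarrow> btree vec" where
  "Phi = lin Phi_basis"

end

theory Submission
  imports Defs
begin

text \<open>Moebius inversion shows that \<open>M\<^sup>*\<^sub>t\<close> is the indicator function of the
  Tamari down-set of \<open>t\<close>. Hence \<open>\<Phi> x = \<Sum>\<^sub>t x(\<psi> t) M\<^sup>*\<^sub>t\<close> with \<open>\<psi> = \<phi>\<^sup>-\<^sup>1\<close>, and its
  inverse reads off the coordinates \<open>\<langle>\<xi>, M\<^sub>s\<rangle>\<close>; these determine \<open>\<xi>\<close> by triangularity
  with respect to a potential that strictly increases along Tamari rotations.

  Multiplicativity comes from \<open>\<phi>(f g) = \<phi>(f) \ \<phi>(g)\<close> and the fact that the trees
  below \<open>a \ b\<close> are exactly those whose splitting at leaf \<open>|a|\<close> lies below \<open>(a, b)\<close>.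

  For the coproduct, the coefficient of \<open>\<Delta>(M\<^sup>*\<^sub>u)\<close> at \<open>(s, t)\<close> counts the terms of
  \<open>F\<^sub>s \<cdot> F\<^sub>t\<close> below \<open>u\<close>. Splitting a product term at a leaf splits both factors,
  which makes this count multiplicative under the operation \<open>under\<close>; and for
  \<open>u = \<phi>(B\<^sub>+(f))\<close> it obeys the same recursion as the number of admissible cuts \<open>R\<close>
  of \<open>B\<^sub>+(f)\<close> with \<open>s \<le> \<phi>(f'\<^sub>R)\<close> and \<open>t \<le> \<phi>(f''\<^sub>R)\<close>. Induction over forests
  identifies the two sides.\<close>

section \<open>Finitely supported vectors\<close>

abbreviation supp :: "'a vec \<Rightarrow> 'a set" where
  "supp x \<equiv> {a. x a \<noteq> 0}"

lemma fsupp_diff: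
  assumes "fsupp x" "fsupp y"
  shows "fsupp (\<lambda>a. x a - y a)"
  using assms unfolding fsupp_def by (rule_tac finite_subset[of _ "supp x \<union> supp y"]) auto

lemma dpair_superset:
  assumes "finite S" "supp x \<subseteq> S"
  shows "dpair \<xi> x = (\<Sum>a\<in>S. \<xi> a * x a)"
  unfolding dpair_def using assms by (intro sum.mono_neutral_left) auto

lemma lin_conv_dpair: "lin g x b = dpair (\<lambda>a. g a b) x"
  by (simp add: lin_def dpair_def mult.commute)

lemma lin_superset:
  assumes "finite S" "supp x \<subseteq> S"
  shows "lin g x b = (\<Sum>a\<in>S. x a * g a b)"
  unfolding lin_conv_dpair dpair_superset[OF assms] by (simp add: mult.commute)

lemma lin_vbasis: "lin g (vbasis a) = g a"
  by (rule ext, subst lin_superset[of "{a}"]) (auto simp: vbasis_def)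

lemma dpair_vbasis_sum:
  assumes "finite I"
  shows "dpair \<xi> (\<lambda>p. \<Sum>i\<in>I. w i * vbasis (h i) p) = (\<Sum>i\<in>I. w i * \<xi> (h i))"
proof -
  have "supp (\<lambda>p. \<Sum>i\<in>I. w i * vbasis (h i) p) \<subseteq> h ` I"
    by (auto simp: vbasis_def elim: sum.not_neutral_contains_not_neutral split: if_splits)
  with assms have "dpair \<xi> (\<lambda>p. \<Sum>i\<in>I. w i * vbasis (h i) p)
      = (\<Sum>p\<in>h ` I. \<xi> p * (\<Sum>i\<in>I. w i * vbasis (h i) p))"
    by (simp add: dpair_superset)
  also have "\<dots> = (\<Sum>p\<in>h ` I. \<Sum>i\<in>I. w i * (\<xi> p * vbasis (h i) p))"
    by (simp add: sum_distrib_left mult.left_commute)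
  also have "\<dots> = (\<Sum>i\<in>I. w i * \<xi> (h i))"
    using assms
    by (subst sum.swap)
      (simp add: vbasis_def sum_distrib_left[symmetric] if_distrib sum.delta' cong: if_cong)
  finally show ?thesis .
qed

lemma lin_vbasis_sum:
  assumes "finite I"
  shows "lin g (\<lambda>p. \<Sum>i\<in>I. w i * vbasis (h i) p) b = (\<Sum>i\<in>I. w i * g (h i) b)"
  unfolding lin_conv_dpair using dpair_vbasis_sum[OF assms] .

lemma supp_lin_subset: "supp (lin g x) \<subseteq> (\<Union>a\<in>supp x. supp (g a))"
proof
  fix b assume "b \<in> supp (lin g x)"
  then obtain a where "a \<in> supp x" "x a * g a b \<noteq> 0"
    unfolding lin_def by (auto elim: sum.not_neutral_contains_not_neutral)
  then show "b \<in> (\<Union>a\<in>supp x. supp (g a))" by auto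
qed

lemma fsupp_lin:
  assumes "fsupp x" "\<And>a. fsupp (g a)"
  shows "fsupp (lin g x)"
  using assms supp_lin_subset[of g x] unfolding fsupp_def by (auto intro: finite_subset)

lemma lin_lin:
  assumes "fsupp x" "\<And>a. fsupp (h a)"
  shows "lin g (lin h x) c = (\<Sum>a\<in>supp x. x a * lin g (h a) c)"
proof -
  let ?S = "\<Union>a\<in>supp x. supp (h a)"
  have S: "finite ?S"
    using assms unfolding fsupp_def by auto
  have "lin g (lin h x) c = (\<Sum>b\<in>?S. (\<Sum>a\<in>supp x. x a * h a b) * g b c)"
    by (subst lin_superset[OF S supp_lin_subset]) (simp add: lin_def)
  also have "\<dots> = (\<Sum>b\<in>?S. \<Sum>a\<in>supp x. x a * (h a b * g b c))"
    by (simp add: sum_distrib_right mult.assoc)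
  also have "\<dots> = (\<Sum>a\<in>supp x. x a * (\<Sum>b\<in>?S. h a b * g b c))"
    by (subst sum.swap) (simp add: sum_distrib_left)
  also have "\<dots> = (\<Sum>a\<in>supp x. x a * lin g (h a) c)"
    using S by (intro sum.cong refl) (subst lin_superset[of ?S], auto)
  finally show ?thesis .
qed

lemma dpair_lin: "dpair (lin g x) z = (\<Sum>a\<in>supp x. x a * dpair (g a) z)"
proof -
  have "dpair (lin g x) z = (\<Sum>b\<in>supp z. (\<Sum>a\<in>supp x. x a * g a b) * z b)"
    by (simp add: dpair_def lin_def)
  also have "\<dots> = (\<Sum>b\<in>supp z. \<Sum>a\<in>supp x. x a * (g a b * z b))"
    by (simp add: sum_distrib_right mult.assoc)
  also have "\<dots> = (\<Sum>a\<in>supp x. x a * dpair (g a) z)"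
    by (subst sum.swap) (simp add: dpair_def sum_distrib_left)
  finally show ?thesis .
qed

lemma dpair_diff: "dpair (\<lambda>a. \<xi> a - \<eta> a) x = dpair \<xi> x - dpair \<eta> x"
  unfolding dpair_def by (simp add: sum_subtractf left_diff_distrib)

lemma supp_comp_inverse:
  assumes "\<And>a. \<psi> (\<phi> a) = a" "\<And>b. \<phi> (\<psi> b) = b"
  shows "supp (\<lambda>b. x (\<psi> b)) = \<phi> ` supp x"
  using assms by (auto intro: image_eqI[where x = "\<psi> _"])

lemma lin_reindex:
  assumes "\<And>a. \<psi> (\<phi> a) = a" "\<And>b. \<phi> (\<psi> b) = b"
  shows "lin (\<lambda>a. g (\<phi> a)) x = lin g (\<lambda>b. x (\<psi> b))"
proof -
  have "inj \<phi>"
    using assms by (metis injI)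
  then show ?thesis
    unfolding lin_def supp_comp_inverse[OF assms] using assms
    by (simp add: sum.reindex inj_on_subset)
qed

lemma bij_betw_comp_fsupp:
  assumes "\<And>a. \<psi> (\<phi> a) = a" "\<And>b. \<phi> (\<psi> b) = b"
  shows "bij_betw (\<lambda>x b. x (\<psi> b)) {x. fsupp x} {y. fsupp y}"
proof (rule bij_betw_byWitness[where f' = "\<lambda>y a. y (\<phi> a)"])
  show "(\<lambda>x b. x (\<psi> b)) ` {x. fsupp x} \<subseteq> {y. fsupp y}"
    "(\<lambda>y a. y (\<phi> a)) ` {y. fsupp y} \<subseteq> {x. fsupp x}"
    using supp_comp_inverse[of \<psi> \<phi>] supp_comp_inverse[of \<phi> \<psi>] assms
    by (auto simp: fsupp_def)
qed (use assms in auto)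

section \<open>Splitting binary trees\<close>

lemma under_Leaf_right [simp]: "under s Leaf = s"
  by (induction s) auto

lemma under_assoc: "under (under a b) c = under a (under b c)"
  by (induction a) auto

lemma bsize_under [simp]: "bsize (under a b) = bsize a + bsize b"
  by (induction a) auto

lemma bsize_ysplit:
  assumes "i \<le> bsize u"
  shows "bsize (fst (ysplit u i)) = i" "bsize (snd (ysplit u i)) = bsize u - i"
proof -
  have "bsize (fst (ysplit u i)) = i \<and> bsize (snd (ysplit u i)) = bsize u - i"
    using assms
  proof (induction u arbitrary: i)
    case (Br l r)
    show ?case
    proof (cases "i \<le> bsize l")
      case True
      then show ?thesis using Br.IH(1)[of i] by (auto split: prod.splits)
    next
      case False
      then show ?thesis using Br.IH(2)[of "i - bsize l - 1"] Br.prems by (auto split: prod.splits)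
    qed
  qed simp
  then show "bsize (fst (ysplit u i)) = i" "bsize (snd (ysplit u i)) = bsize u - i"
    by auto
qed

lemma bsize_eq_0_iff: "bsize t = 0 \<longleftrightarrow> t = Leaf"
  by (cases t) auto

lemma ysplit_0: "ysplit t 0 = (Leaf, t)"
  by (induction t) (auto split: prod.splits)

lemma ysplit_under: "ysplit (under a b) (bsize a) = (a, b)"
  by (induction a) (auto simp: ysplit_0 split: prod.splits)

lemma ysplit_bsize: "ysplit s (bsize s) = (s, Leaf)"
  using ysplit_under[of s Leaf] by simp

lemma ysplit_ysplit:
  assumes "i \<le> j" "j \<le> bsize s"
  shows "fst (ysplit (fst (ysplit s j)) i) = fst (ysplit s i)
    \<and> snd (ysplit (fst (ysplit s j)) i) = fst (ysplit (snd (ysplit s i)) (j - i))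
    \<and> snd (ysplit (snd (ysplit s i)) (j - i)) = snd (ysplit s j)"
  using assms
proof (induction s arbitrary: i j)
  case (Br l r)
  consider "j \<le> bsize l" | "i \<le> bsize l" "\<not> j \<le> bsize l" | "\<not> i \<le> bsize l"
    using Br.prems by linarith
  then show ?case
  proof cases
    case 1
    then show ?thesis
      using Br.IH(1)[of i j] Br.prems bsize_ysplit[of j l] bsize_ysplit[of i l]
      by (auto split: prod.splits)
  next
    case 2
    then show ?thesis
      using bsize_ysplit[of i l] by (auto split: prod.splits)
  next
    case 3
    then have "j - bsize l - 1 - (i - bsize l - 1) = j - i" by linarith
    with 3 show ?thesis
      using Br.IH(2)[of "i - bsize l - 1" "j - bsize l - 1"] Br.prems
      by (auto split: prod.splits)
  qed
qed simp

section \<open>The Tamari order\<close>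

text \<open>A potential for the Tamari order: a rotation \<open>(a \<or> b) \<or> c \<rightarrow> a \<or> (b \<or> c)\<close> raises it
  by \<open>bsize c + 1\<close>.\<close>

fun right_weight :: "btree \<Rightarrow> nat" where
  "right_weight Leaf = 0"
| "right_weight (Br l r) = right_weight l + right_weight r + bsize r"

lemma tamari_step_bsize: "tamari_step a b \<Longrightarrow> bsize a = bsize b"
  by (induction rule: tamari_step.induct) auto

lemma tamari_step_right_weight: "tamari_step a b \<Longrightarrow> right_weight a < right_weight b"
  by (induction rule: tamari_step.induct) (auto dest: tamari_step_bsize)

lemma tamari_le_refl [simp]: "tamari_le a a"
  by (simp add: tamari_le_def)

lemma tamari_le_trans: "tamari_le a b \<Longrightarrow> tamari_le b c \<Longrightarrow> tamari_le a c"
  unfolding tamari_le_def by simp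

lemma tamari_step_imp_le: "tamari_step a b \<Longrightarrow> tamari_le a b"
  by (simp add: tamari_le_def)

lemma tamari_le_bsize: "tamari_le a b \<Longrightarrow> bsize a = bsize b"
  unfolding tamari_le_def by (induction rule: rtranclp_induct) (auto dest: tamari_step_bsize)

lemma tamari_le_right_weight: "tamari_le a b \<Longrightarrow> right_weight a \<le> right_weight b"
  unfolding tamari_le_def
  by (induction rule: rtranclp_induct) (auto dest: tamari_step_right_weight)

lemma tamari_less_right_weight:
  assumes "tamari_le a b" "a \<noteq> b"
  shows "right_weight a < right_weight b"
proof -
  obtain c where "tamari_le a c" "tamari_step c b"
    using assms unfolding tamari_le_def by (metis rtranclp.cases)
  then show ?thesis
    using tamari_le_right_weight tamari_step_right_weight by (meson le_less_trans)
qed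

lemma tamari_le_antisym: "tamari_le a b \<Longrightarrow> tamari_le b a \<Longrightarrow> a = b"
  using tamari_less_right_weight tamari_le_right_weight by fastforce

lemma tamari_le_Leaf_iff [simp]: "tamari_le t Leaf \<longleftrightarrow> t = Leaf"
  using tamari_le_bsize[of t Leaf] by (cases t) auto

lemma Leaf_tamari_le_iff [simp]: "tamari_le Leaf t \<longleftrightarrow> t = Leaf"
  using tamari_le_bsize[of Leaf t] by (cases t) auto

lemma tamari_le_Br_left: "tamari_le l l' \<Longrightarrow> tamari_le (Br l r) (Br l' r)"
  unfolding tamari_le_def
  by (induction rule: rtranclp_induct) (auto intro: rtranclp.rtrancl_into_rtrancl tamari_step.left)

lemma tamari_le_Br_right: "tamari_le r r' \<Longrightarrow> tamari_le (Br l r) (Br l r')"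
  unfolding tamari_le_def
  by (induction rule: rtranclp_induct) (auto intro: rtranclp.rtrancl_into_rtrancl tamari_step.right)

lemma tamari_le_Br_Leaf_iff:
  "tamari_le w (Br x Leaf) \<longleftrightarrow> (\<exists>w'. w = Br w' Leaf \<and> tamari_le w' x)"
proof
  assume "tamari_le w (Br x Leaf)"
  then show "\<exists>w'. w = Br w' Leaf \<and> tamari_le w' x"
    unfolding tamari_le_def
  proof (induction rule: converse_rtranclp_induct)
    case (step y z)
    then obtain z' where z: "z = Br z' Leaf" "tamari_step\<^sup>*\<^sup>* z' x" by auto
    from step(1) z show ?case
      by (cases rule: tamari_step.cases)
        (auto intro: converse_rtranclp_into_rtranclp elim: tamari_step.cases)
  qed auto
qed (auto intro: tamari_le_Br_left)

lemma finite_bsize_eq: "finite {t. bsize t = n}"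
proof (induction n rule: less_induct)
  case (less n)
  show ?case
  proof (cases n)
    case 0
    then have "{t. bsize t = n} = {Leaf}" by (auto elim: bsize.elims)
    then show ?thesis by simp
  next
    case (Suc m)
    have "{t. bsize t = n} \<subseteq> (\<Union>k\<le>m. case_prod Br ` ({l. bsize l = k} \<times> {r. bsize r = m - k}))"
    proof
      fix t assume "t \<in> {t. bsize t = n}"
      then show "t \<in> (\<Union>k\<le>m. case_prod Br ` ({l. bsize l = k} \<times> {r. bsize r = m - k}))"
        using Suc by (cases t) force+
    qed
    moreover have "finite (\<Union>k\<le>m. case_prod Br ` ({l. bsize l = k} \<times> {r. bsize r = m - k}))"
      using less Suc by auto
    ultimately show ?thesis by (rule finite_subset)
  qed
qed

lemma finite_tamari_above: "finite {a. tamari_le s a}"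
  by (rule finite_subset[OF _ finite_bsize_eq[of "bsize s"]]) (auto dest: tamari_le_bsize)

lemma finite_tamari_below: "finite {a. tamari_le a s}"
  by (rule finite_subset[OF _ finite_bsize_eq[of "bsize s"]]) (auto dest: tamari_le_bsize)

lemma tamari_le_under_right: "tamari_le b b' \<Longrightarrow> tamari_le (under a b) (under a b')"
  by (induction a) (auto intro: tamari_le_Br_right)

lemma tamari_step_under_left: "tamari_step a a' \<Longrightarrow> tamari_step (under a b) (under a' b)"
  by (induction rule: tamari_step.induct) (auto intro: tamari_step.intros)

lemma tamari_le_under_left: "tamari_le a a' \<Longrightarrow> tamari_le (under a b) (under a' b)"
  unfolding tamari_le_def
  by (induction rule: rtranclp_induct)
    (auto intro: rtranclp.rtrancl_into_rtrancl tamari_step_under_left)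

lemma tamari_le_under: "tamari_le a a' \<Longrightarrow> tamari_le b b' \<Longrightarrow> tamari_le (under a b) (under a' b')"
  using tamari_le_under_left tamari_le_under_right tamari_le_trans by blast

lemma Br_under_tamari_le: "tamari_le (Br (under a b) r) (under a (Br b r))"
proof (induction a)
  case (Br a1 a2)
  have "tamari_step (Br (Br a1 (under a2 b)) r) (Br a1 (Br (under a2 b) r))"
    by (rule tamari_step.rot)
  moreover have "tamari_le (Br a1 (Br (under a2 b) r)) (Br a1 (under a2 (Br b r)))"
    using Br.IH(2) by (rule tamari_le_Br_right)
  ultimately show ?case using tamari_step_imp_le tamari_le_trans by fastforce
qed simp

lemma tamari_le_under_ysplit: "tamari_le u (under (fst (ysplit u i)) (snd (ysplit u i)))"
proof (induction u arbitrary: i)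
  case (Br l r)
  show ?case
  proof (cases "i \<le> bsize l")
    case True
    obtain a b where ab: "ysplit l i = (a, b)" by fastforce
    have "tamari_le (Br l r) (Br (under a b) r)"
      using Br.IH(1)[of i] ab by (auto intro: tamari_le_Br_left)
    then show ?thesis using True ab Br_under_tamari_le tamari_le_trans by auto
  next
    case False
    then show ?thesis
      using Br.IH(2)[of "i - bsize l - 1"] by (auto split: prod.splits intro: tamari_le_Br_right)
  qed
qed simp

lemma tamari_step_ysplit:
  "tamari_step u v \<Longrightarrow> tamari_le (fst (ysplit u i)) (fst (ysplit v i))
    \<and> tamari_le (snd (ysplit u i)) (snd (ysplit v i))"
proof (induction arbitrary: i rule: tamari_step.induct)
  case (rot a b c)
  consider "i \<le> bsize a" | "\<not> i \<le> bsize a" "i \<le> bsize a + bsize b + 1"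
    | "\<not> i \<le> bsize a + bsize b + 1"
    by linarith
  then show ?case
  proof cases
    case 1
    then show ?thesis by (auto split: prod.splits intro!: tamari_step_imp_le tamari_step.rot)
  next
    case 2
    then show ?thesis by (auto split: prod.splits)
  next
    case 3
    then have "i - bsize a - 1 - bsize b - 1 = i - (bsize a + bsize b + 1) - 1" by simp
    with 3 show ?thesis by (auto split: prod.splits intro!: tamari_step_imp_le tamari_step.rot)
  qed
next
  case (left l l' r)
  have sz: "bsize l = bsize l'" using left.hyps by (rule tamari_step_bsize)
  show ?case
  proof (cases "i \<le> bsize l")
    case True
    then show ?thesis using left.IH[of i] sz by (auto split: prod.splits intro: tamari_le_Br_left)
  next
    case False
    then show ?thesis
      using sz left.hyps by (auto split: prod.splits intro!: tamari_step_imp_le tamari_step.left)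
  qed
next
  case (right r r' l)
  show ?case
  proof (cases "i \<le> bsize l")
    case True
    then show ?thesis
      using right.hyps by (auto split: prod.splits intro!: tamari_step_imp_le tamari_step.right)
  next
    case False
    then show ?thesis
      using right.IH[of "i - bsize l - 1"] by (auto split: prod.splits intro: tamari_le_Br_right)
  qed
qed

lemma tamari_le_ysplit:
  assumes "tamari_le u v"
  shows "tamari_le (fst (ysplit u i)) (fst (ysplit v i))"
    "tamari_le (snd (ysplit u i)) (snd (ysplit v i))"
proof -
  from assms have "tamari_le (fst (ysplit u i)) (fst (ysplit v i))
    \<and> tamari_le (snd (ysplit u i)) (snd (ysplit v i))"
    unfolding tamari_le_def
  proof (induction rule: rtranclp_induct)
    case (step y z)
    then show ?case
      using tamari_step_ysplit[OF step(2), of i] unfolding tamari_le_def by auto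
  qed simp
  then show "tamari_le (fst (ysplit u i)) (fst (ysplit v i))"
    "tamari_le (snd (ysplit u i)) (snd (ysplit v i))"
    by auto
qed

lemma tamari_le_under_iff:
  "tamari_le u (under a b) \<longleftrightarrow> bsize a \<le> bsize u \<and> tamari_le (fst (ysplit u (bsize a))) a
     \<and> tamari_le (snd (ysplit u (bsize a))) b"
proof
  assume le: "tamari_le u (under a b)"
  then have "bsize u = bsize a + bsize b" using tamari_le_bsize by fastforce
  then show "bsize a \<le> bsize u \<and> tamari_le (fst (ysplit u (bsize a))) a
     \<and> tamari_le (snd (ysplit u (bsize a))) b"
    using tamari_le_ysplit[OF le, of "bsize a"] ysplit_under[of a b] by simp
qed (use tamari_le_under_ysplit tamari_le_under tamari_le_trans in blast)

lemma of_bool_tamari_le_under: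
  "(of_bool (tamari_le u (under a b)) :: 'a::comm_semiring_1) =
     (\<Sum>i\<in>{0..bsize u}.
        of_bool (tamari_le (fst (ysplit u i)) a) * of_bool (tamari_le (snd (ysplit u i)) b))"
proof -
  have off_diagonal:
    "of_bool (tamari_le (fst (ysplit u i)) a) * of_bool (tamari_le (snd (ysplit u i)) b) = (0::'a)"
    if "i \<in> {0..bsize u}" "i \<noteq> bsize a" for i
    using that bsize_ysplit[of i u] tamari_le_bsize[of "fst (ysplit u i)" a] by auto
  show ?thesis
  proof (cases "bsize a \<le> bsize u")
    case True
    then show ?thesis
      using off_diagonal tamari_le_under_iff[of u a b]
      by (subst sum.remove[of _ "bsize a"]) (auto intro!: sum.neutral)
  next
    case False
    then show ?thesis
      using off_diagonal tamari_le_under_iff[of u a b] by (auto intro!: sum.neutral[symmetric])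
  qed
qed

section \<open>The dual basis \<open>M\<^sup>*\<close>\<close>

function tamari_mobius :: "btree \<Rightarrow> btree \<Rightarrow> int" where
  "tamari_mobius x y = (if x = y then 1 else if tamari_le x y then
      - (\<Sum>z\<in>{z. tamari_le x z \<and> tamari_le z y \<and> z \<noteq> y}. tamari_mobius x z) else 0)"
  by auto
termination
  by (relation "measure (\<lambda>(x, y). right_weight y)") (auto simp: tamari_less_right_weight)

declare tamari_mobius.simps [simp del]

lemma mobius_tamari_le: "mobius tamari_le = tamari_mobius"
  unfolding mobius_def
proof (rule the_equality)
  fix m :: "btree \<Rightarrow> btree \<Rightarrow> int"
  assume m: "\<forall>x y. m x y = (if x = y then 1 else if tamari_le x y then
      - (\<Sum>z\<in>{z. tamari_le x z \<and> tamari_le z y \<and> z \<noteq> y}. m x z) else 0)"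
  have "m x y = tamari_mobius x y" for x y
  proof (induction y rule: measure_induct_rule[of right_weight])
    case (less y)
    have "(\<Sum>z\<in>{z. tamari_le x z \<and> tamari_le z y \<and> z \<noteq> y}. m x z) =
          (\<Sum>z\<in>{z. tamari_le x z \<and> tamari_le z y \<and> z \<noteq> y}. tamari_mobius x z)"
      using less by (intro sum.cong) (auto simp: tamari_less_right_weight)
    then show ?case using m by (subst tamari_mobius.simps) simp
  qed
  then show "m = tamari_mobius" by (intro ext)
qed (subst tamari_mobius.simps, simp)

lemma sum_tamari_mobius:
  "(\<Sum>a\<in>{a. tamari_le s a \<and> tamari_le a t}. tamari_mobius s a) = of_bool (s = t)"
proof (cases "tamari_le s t \<and> s \<noteq> t")
  case True
  have "finite {z. tamari_le s z \<and> tamari_le z t \<and> z \<noteq> t}"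
    by (rule finite_subset[OF _ finite_tamari_above[of s]]) auto
  moreover have "{a. tamari_le s a \<and> tamari_le a t}
      = insert t {z. tamari_le s z \<and> tamari_le z t \<and> z \<noteq> t}"
    using True by auto
  ultimately show ?thesis
    using True by (simp add: tamari_mobius.simps[of s t])
next
  case False
  then have "{a. tamari_le s a \<and> tamari_le a t} = (if s = t then {s} else {})"
    using tamari_le_antisym tamari_le_trans by auto
  then show ?thesis by (simp add: tamari_mobius.simps)
qed

lemma dpair_Mbasis:
  "dpair \<xi> (Mbasis s) = (\<Sum>a\<in>{a. tamari_le s a}. \<xi> a * of_int (tamari_mobius s a))"
  by (subst dpair_superset[OF finite_tamari_above])
    (auto simp: Mbasis_def mobius_tamari_le intro!: sum.cong)

lemma dpair_downset_Mbasis: "dpair (\<lambda>a. of_bool (tamari_le a t)) (Mbasis s) = of_bool (s = t)"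
proof -
  have "dpair (\<lambda>a. of_bool (tamari_le a t)) (Mbasis s)
      = (\<Sum>a\<in>{a. tamari_le s a}. if tamari_le a t then of_int (tamari_mobius s a) else 0)"
    unfolding dpair_Mbasis by (intro sum.cong) auto
  also have "\<dots> = (\<Sum>a\<in>{a. tamari_le s a \<and> tamari_le a t}. of_int (tamari_mobius s a))"
    using finite_tamari_above by (simp add: sum.inter_filter[symmetric] conj_commute)
  finally show ?thesis
    by (simp add: sum_tamari_mobius flip: of_int_sum)
qed

lemma Mbasis_coords_eq_0:
  assumes "fsupp \<zeta>" "\<And>s. dpair \<zeta> (Mbasis s) = 0"
  shows "\<zeta> = (\<lambda>_. 0)"
proof (rule ccontr)
  assume "\<zeta> \<noteq> (\<lambda>_. 0)"
  then have fin: "finite (right_weight ` supp \<zeta>)" and ne: "right_weight ` supp \<zeta> \<noteq> {}"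
    using assms(1) unfolding fsupp_def by auto
  obtain a where a: "a \<in> supp \<zeta>" "right_weight a = Max (right_weight ` supp \<zeta>)"
    using Max_in[OF fin ne] by auto
  txt \<open>By triangularity, only the diagonal term survives at a support element of maximal
    right weight.\<close>
  have "\<zeta> b = 0" if "tamari_le a b" "b \<noteq> a" for b
  proof (rule ccontr)
    assume "\<zeta> b \<noteq> 0"
    then have "right_weight b \<le> right_weight a"
      unfolding a(2) using fin by (simp add: Max_ge)
    with tamari_less_right_weight[OF that(1)] that(2) show False by simp
  qed
  then have "dpair \<zeta> (Mbasis a) = (\<Sum>b\<in>{a}. \<zeta> b * of_int (tamari_mobius a b))"
    unfolding dpair_Mbasis by (intro sum.mono_neutral_right) (auto simp: finite_tamari_above)
  then show False
    using assms(2)[of a] a by (simp add: tamari_mobius.simps)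
qed

lemma fsupp_downset: "fsupp (\<lambda>a. of_bool (tamari_le a t))"
  unfolding fsupp_def by (rule finite_subset[OF _ finite_tamari_below[of t]]) auto

lemma Mdual_eq: "Mdual t = (\<lambda>a. of_bool (tamari_le a t))"
  unfolding Mdual_def
proof (rule the_equality)
  show "fsupp (\<lambda>a. of_bool (tamari_le a t)) \<and>
      (\<forall>s. dpair (\<lambda>a. of_bool (tamari_le a t)) (Mbasis s) = (if s = t then 1 else 0))"
    by (simp add: fsupp_downset dpair_downset_Mbasis)
next
  fix \<xi> assume \<xi>: "fsupp \<xi> \<and> (\<forall>s. dpair \<xi> (Mbasis s) = (if s = t then 1 else 0))"
  have "fsupp (\<lambda>a. \<xi> a - of_bool (tamari_le a t))"
    using \<xi> fsupp_downset[of t] by (simp add: fsupp_diff)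
  moreover have "dpair (\<lambda>a. \<xi> a - of_bool (tamari_le a t)) (Mbasis s) = 0" for s
    using \<xi> by (simp add: dpair_diff dpair_downset_Mbasis)
  ultimately have "(\<lambda>a. \<xi> a - of_bool (tamari_le a t)) = (\<lambda>_. 0)"
    by (rule Mbasis_coords_eq_0)
  then show "\<xi> = (\<lambda>a. of_bool (tamari_le a t))"
    by (simp add: fun_eq_iff)
qed

lemma fsupp_Mdual: "fsupp (Mdual t)"
  by (simp add: Mdual_eq fsupp_downset)

lemma dpair_Mdual_Mbasis: "dpair (Mdual t) (Mbasis s) = of_bool (s = t)"
  by (simp add: Mdual_eq dpair_downset_Mbasis)

lemma dpair_lin_Mdual_Mbasis:
  assumes "fsupp y"
  shows "dpair (lin Mdual y) (Mbasis s) = y s"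
proof -
  have "dpair (lin Mdual y) (Mbasis s) = (\<Sum>a\<in>supp y. if a = s then y a else 0)"
    by (auto simp: dpair_lin dpair_Mdual_Mbasis intro: sum.cong)
  then show ?thesis
    using assms by (simp add: fsupp_def sum.delta)
qed

lemma fsupp_Mbasis_coords:
  assumes "fsupp \<xi>"
  shows "fsupp (\<lambda>s. dpair \<xi> (Mbasis s))"
proof -
  have "supp (\<lambda>s. dpair \<xi> (Mbasis s)) \<subseteq> (\<Union>a\<in>supp \<xi>. {s. tamari_le s a})"
    by (auto simp: dpair_Mbasis elim!: sum.not_neutral_contains_not_neutral)
  then show ?thesis
    using assms finite_tamari_below unfolding fsupp_def by (auto intro: finite_subset)
qed

lemma lin_Mdual_Mbasis_coords:
  assumes "fsupp \<xi>"
  shows "lin Mdual (\<lambda>s. dpair \<xi> (Mbasis s)) = \<xi>"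
proof -
  let ?y = "\<lambda>s. dpair \<xi> (Mbasis s)"
  have y: "fsupp ?y"
    using assms by (rule fsupp_Mbasis_coords)
  have "fsupp (\<lambda>a. \<xi> a - lin Mdual ?y a)"
    using assms fsupp_lin[OF y fsupp_Mdual] by (rule fsupp_diff)
  moreover have "dpair (\<lambda>a. \<xi> a - lin Mdual ?y a) (Mbasis s) = 0" for s
    by (simp add: dpair_diff dpair_lin_Mdual_Mbasis[OF y])
  ultimately have "(\<lambda>a. \<xi> a - lin Mdual ?y a) = (\<lambda>_. 0)"
    by (rule Mbasis_coords_eq_0)
  then show ?thesis
    by (simp add: fun_eq_iff)
qed

lemma bij_betw_lin_Mdual: "bij_betw (lin Mdual) {y. fsupp y} {\<xi>. fsupp \<xi>}"
proof (rule bij_betw_byWitness[where f' = "\<lambda>\<xi> s. dpair \<xi> (Mbasis s)"])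
  show "lin Mdual ` {y. fsupp y} \<subseteq> {\<xi>. fsupp \<xi>}"
    using fsupp_lin fsupp_Mdual by blast
qed (auto simp: dpair_lin_Mdual_Mbasis lin_Mdual_Mbasis_coords fsupp_Mbasis_coords)

section \<open>Forests and \<open>\<Phi>\<close>\<close>

lemma phiF_append: "phiF (f @ g) = under (phiF f) (phiF g)"
  by (induction f) (auto simp: under_assoc)

fun psiB :: "btree \<Rightarrow> forest" where
  "psiB Leaf = []"
| "psiB (Br l r) = Node (psiB l) # psiB r"

lemma phiF_psiB [simp]: "phiF (psiB b) = b"
  by (induction b) auto

lemma psiB_phiF [simp]: "psiB (phiF f) = f"
proof (induction f rule: measure_induct_rule[of "size_list size"])
  case (less f)
  show ?case
  proof (cases f)
    case (Cons T Ts)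
    then show ?thesis using less by (cases T) simp
  qed simp
qed

lemma phiF_eq_Leaf_iff [simp]: "phiF f = Leaf \<longleftrightarrow> f = []"
proof (cases f)
  case (Cons T Ts)
  then show ?thesis by (cases T) simp
qed simp

lemma tnodes_fnodes_card:
  shows "finite (tnodes T) \<and> card (tnodes T) = bsize (phiT T) \<and> [] \<in> tnodes T"
    and "finite (fnodes k f) \<and> card (fnodes k f) = bsize (phiF f)
      \<and> (\<forall>p\<in>fnodes k f. p \<noteq> [] \<and> k \<le> hd p)"
proof (induction T and k f rule: tnodes_fnodes.induct)
  case (1 cs)
  then have "[] \<notin> fnodes 0 cs" by auto
  with 1 show ?case by simp
next
  case (3 k t ts)
  then have "Cons k ` tnodes t \<inter> fnodes (Suc k) ts = {}" by fastforce
  with 3 have "card (Cons k ` tnodes t \<union> fnodes (Suc k) ts)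
      = card (tnodes t) + card (fnodes (Suc k) ts)"
    by (simp add: card_Un_disjoint card_image)
  with 3 show ?case by (cases t) auto
qed simp

lemma fdeg_eq_bsize_phiF: "fdeg f = bsize (phiF f)"
  unfolding fdeg_def nodes_def using tnodes_fnodes_card(2) by blast

lemma Phi_eq_lin_Mdual: "Phi x = lin Mdual (\<lambda>t. x (psiB t))"
  unfolding Phi_def Phi_basis_def by (rule lin_reindex) simp_all

lemma bij_betw_Phi: "bij_betw Phi {x. fsupp x} {\<xi>. fsupp \<xi>}"
  unfolding Phi_eq_lin_Mdual[abs_def]
  using bij_betw_trans[OF bij_betw_comp_fsupp[of psiB phiF] bij_betw_lin_Mdual]
  by (simp add: comp_def)

lemma Phi_superset:
  assumes "finite S" "supp x \<subseteq> S"
  shows "Phi x u = (\<Sum>f\<in>S. x f * of_bool (tamari_le u (phiF f)))"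
  unfolding Phi_def lin_superset[OF assms] by (simp add: Phi_basis_def Mdual_eq)

lemma Phi_graded:
  assumes "fsupp x" "\<forall>f. x f \<noteq> 0 \<longrightarrow> fdeg f = n" "Phi x t \<noteq> 0"
  shows "bsize t = n"
proof -
  have "(\<Sum>f\<in>supp x. x f * of_bool (tamari_le t (phiF f))) \<noteq> 0"
    using assms(1,3) Phi_superset[of "supp x" x t] by (simp add: fsupp_def)
  then obtain f where "x f \<noteq> 0" "tamari_le t (phiF f)"
    by (auto elim: sum.not_neutral_contains_not_neutral)
  then show ?thesis
    using assms(2) by (simp add: fdeg_eq_bsize_phiF tamari_le_bsize)
qed

lemma Phi_unit: "Phi unitN = unitLR"
  by (auto simp: Phi_def unitN_def lin_vbasis Phi_basis_def Mdual_eq unitLR_def)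

lemma Phi_counit:
  assumes "fsupp x"
  shows "counitLR (Phi x) = counitN x"
proof -
  have S: "finite (insert [] (supp x))" "supp x \<subseteq> insert [] (supp x)"
    using assms by (auto simp: fsupp_def)
  have "counitLR (Phi x) = Phi x Leaf"
    unfolding counitLR_def unitY_def by (subst dpair_superset[of "{Leaf}"]) (auto simp: vbasis_def)
  also have "\<dots> = (\<Sum>f\<in>insert [] (supp x). if f = [] then x f else 0)"
    unfolding Phi_superset[OF S] by (intro sum.cong) auto
  also have "\<dots> = counitN x"
    using S by (simp add: counitN_def sum.delta)
  finally show ?thesis .
qed

lemma multLR_eq:
  "multLR \<xi> \<eta> u = (\<Sum>i\<in>{0..bsize u}. \<xi> (fst (ysplit u i)) * \<eta> (snd (ysplit u i)))"
proof -
  have "tpair \<xi> \<eta> z = dpair (\<lambda>p. \<xi> (fst p) * \<eta> (snd p)) z" for z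
    by (simp add: tpair_def dpair_def)
  then show ?thesis
    unfolding multLR_def DeltaY_basis_def
    using dpair_vbasis_sum[of "{0..bsize u}" _ "\<lambda>_. 1"] by simp
qed

lemma Phi_basis_append:
  "Phi_basis (f @ g) u = (\<Sum>i\<in>{0..bsize u}.
     Phi_basis f (fst (ysplit u i)) * Phi_basis g (snd (ysplit u i)))"
  by (simp add: Phi_basis_def Mdual_eq phiF_append of_bool_tamari_le_under)

lemma Phi_mult:
  assumes "fsupp x" "fsupp y"
  shows "Phi (multN x y) = multLR (Phi x) (Phi y)"
proof
  fix u
  have fin: "finite (supp x \<times> supp y)"
    using assms by (simp add: fsupp_def)
  have "multN x y = (\<lambda>c. \<Sum>(f, g)\<in>supp x \<times> supp y. x f * y g * vbasis (f @ g) c)"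
    unfolding multN_def lin2_def by (simp add: sum.cartesian_product)
  then have "Phi (multN x y) u = (\<Sum>(f, g)\<in>supp x \<times> supp y. x f * y g * Phi_basis (f @ g) u)"
    unfolding Phi_def using lin_vbasis_sum[OF fin, of _ "\<lambda>(f, g). x f * y g" "\<lambda>(f, g). f @ g"]
    by (simp add: case_prod_beta')
  also have "\<dots> = (\<Sum>i\<in>{0..bsize u}. \<Sum>(f, g)\<in>supp x \<times> supp y.
      (x f * Phi_basis f (fst (ysplit u i))) * (y g * Phi_basis g (snd (ysplit u i))))"
    unfolding Phi_basis_append
    by (subst sum.swap) (simp add: sum_distrib_left ac_simps case_prod_beta')
  also have "\<dots> = multLR (Phi x) (Phi y) u"
    unfolding multLR_eq Phi_def lin_def
    by (simp add: sum_product sum.cartesian_product case_prod_beta')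
  finally show "Phi (multN x y) u = multLR (Phi x) (Phi y) u" .
qed

section \<open>Terms of the product \<open>F\<^sub>s \<cdot> F\<^sub>t\<close>\<close>

definition sorted_seqs :: "nat \<Rightarrow> nat \<Rightarrow> nat list set" where
  "sorted_seqs p q = {is. length is = q \<and> sorted is \<and> (\<forall>i\<in>set is. i \<le> p)}"

definition mult_term :: "btree \<Rightarrow> btree \<Rightarrow> nat list \<Rightarrow> btree" where
  "mult_term s t is = graft (ydivide s is) t"

lemma multY_basis_eq:
  "multY_basis s t = (\<lambda>u. \<Sum>is\<in>sorted_seqs (bsize s) (bsize t). vbasis (mult_term s t is) u)"
  by (simp add: multY_basis_def sorted_seqs_def mult_term_def)

lemma finite_sorted_seqs: "finite (sorted_seqs p q)"
  by (rule finite_subset[of _ "{xs. set xs \<subseteq> {0..p} \<and> length xs = q}"])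
    (auto simp: sorted_seqs_def intro: finite_lists_length_eq)

lemma sorted_seqs_0 [simp]: "sorted_seqs p 0 = {[]}"
  by (auto simp: sorted_seqs_def)

lemma sorted_seqs_nth: "is \<in> sorted_seqs p q \<Longrightarrow> n < q \<Longrightarrow> is ! n \<le> p"
  by (auto simp: sorted_seqs_def)

lemma sorted_seqs_take:
  assumes "is \<in> sorted_seqs p q" "n < q"
  shows "take n is \<in> sorted_seqs (is ! n) n"
proof -
  have "x \<le> is ! n" if "x \<in> set (take n is)" for x
    using that assms sorted_nth_mono[of "is" _ n]
    by (auto simp: sorted_seqs_def in_set_conv_nth)
  then show ?thesis
    using assms by (auto simp: sorted_seqs_def sorted_wrt_take)
qed

lemma sorted_map_diff: "sorted (xs :: nat list) \<Longrightarrow> sorted (map (\<lambda>j. j - c) xs)"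
  unfolding sorted_map by (rule sorted_wrt_mono_rel[of xs "(\<le>)"]) (auto intro: diff_le_mono)

lemma sorted_seqs_drop:
  assumes "is \<in> sorted_seqs p q" "n < q"
  shows "map (\<lambda>j. j - is ! n) (drop (n + 1) is) \<in> sorted_seqs (p - is ! n) (q - n - 1)"
  using assms
  by (auto simp: sorted_seqs_def intro!: sorted_map_diff sorted_wrt_drop diff_le_mono
      dest: in_set_dropD)

lemma sorted_seqs_append:
  assumes "is0 \<in> sorted_seqs k1 k2" "is1 \<in> sorted_seqs (p - k1) (q - k2)" "k1 \<le> p" "k2 \<le> q"
  shows "is0 @ map (\<lambda>i. i + k1) is1 \<in> sorted_seqs p q"
  using assms unfolding sorted_seqs_def
  by (auto simp: sorted_append sorted_map intro: sorted_wrt_mono_rel[of _ "(\<le>)"])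

lemma ydivide_Nil [simp]: "ydivide s [] = [s]"
  by (simp add: ydivide_def)

lemma ydivide_snoc: "ydivide s (zs @ [y]) = ydivide (fst (ysplit s y)) zs @ [snd (ysplit s y)]"
  by (simp add: ydivide_def)

lemma length_ydivide [simp]: "length (ydivide s is) = length is + 1"
proof -
  have "length (ydivide_rev s js) = length js + 1" for js
    by (induction js arbitrary: s) auto
  then show ?thesis by (simp add: ydivide_def)
qed

lemma ydivide_append_Cons:
  assumes "sorted (xs @ i # ys)" "\<forall>x\<in>set (xs @ i # ys). x \<le> bsize s"
  shows "ydivide s (xs @ i # ys)
    = ydivide (fst (ysplit s i)) xs @ ydivide (snd (ysplit s i)) (map (\<lambda>j. j - i) ys)"
  using assms
proof (induction ys arbitrary: s rule: rev_induct)
  case Nil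
  then show ?case using ydivide_snoc[of s xs i] by simp
next
  case (snoc y ys)
  let ?s' = "fst (ysplit s y)"
  have y: "i \<le> y" "y \<le> bsize s"
    using snoc.prems by (auto simp: sorted_append)
  have "ydivide s (xs @ i # ys @ [y]) = ydivide ?s' (xs @ i # ys) @ [snd (ysplit s y)]"
    using ydivide_snoc[of s "xs @ i # ys" y] by simp
  also have "\<dots> = ydivide (fst (ysplit ?s' i)) xs
      @ ydivide (snd (ysplit ?s' i)) (map (\<lambda>j. j - i) ys) @ [snd (ysplit s y)]"
    using snoc.prems bsize_ysplit(1)[OF y(2)]
    by (subst snoc.IH) (auto simp: sorted_append)
  also have "\<dots> = ydivide (fst (ysplit s i)) xs
      @ ydivide (snd (ysplit s i)) (map (\<lambda>j. j - i) (ys @ [y]))"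
    using ysplit_ysplit[OF y] ydivide_snoc[of "snd (ysplit s i)" "map (\<lambda>j. j - i) ys" "y - i"]
    by simp
  finally show ?case by simp
qed

lemma sum_bsize_ydivide:
  "sorted is \<Longrightarrow> \<forall>x\<in>set is. x \<le> bsize s \<Longrightarrow> sum_list (map bsize (ydivide s is)) = bsize s"
proof (induction "is" arbitrary: s rule: rev_induct)
  case (snoc y ys)
  then have "y \<le> bsize s" by simp
  with snoc show ?case
    using snoc.IH[of "fst (ysplit s y)"] bsize_ysplit[of y s]
    by (auto simp: ydivide_snoc sorted_append)
qed simp

lemma bsize_graft:
  "length ts = bsize t + 1 \<Longrightarrow> bsize (graft ts t) = bsize t + sum_list (map bsize ts)"
proof (induction t arbitrary: ts)
  case Leaf
  then obtain x where "ts = [x]" by (cases ts) auto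
  then show ?case by simp
next
  case (Br l r)
  have "sum_list (map bsize ts) = sum_list (map bsize (take (bsize l + 1) ts))
      + sum_list (map bsize (drop (bsize l + 1) ts))"
    by (metis map_append sum_list_append append_take_drop_id)
  with Br show ?case by simp
qed

lemma bsize_mult_term:
  "is \<in> sorted_seqs (bsize s) (bsize t) \<Longrightarrow> bsize (mult_term s t is) = bsize s + bsize t"
  by (simp add: mult_term_def sorted_seqs_def bsize_graft sum_bsize_ydivide)

lemma mult_term_Leaf [simp]: "mult_term s Leaf [] = s"
  by (simp add: mult_term_def)

lemma mult_term_Br:
  assumes "is \<in> sorted_seqs (bsize s) (bsize ta + bsize tb + 1)"
  shows "mult_term s (Br ta tb) is = Br
     (mult_term (fst (ysplit s (is ! bsize ta))) ta (take (bsize ta) is))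
     (mult_term (snd (ysplit s (is ! bsize ta))) tb
        (map (\<lambda>j. j - is ! bsize ta) (drop (bsize ta + 1) is)))"
proof -
  let ?m = "bsize ta"
  have "is = take ?m is @ is ! ?m # drop (?m + 1) is"
    using assms id_take_nth_drop[of ?m "is"] by (simp add: sorted_seqs_def)
  then have "ydivide s is = ydivide (fst (ysplit s (is ! ?m))) (take ?m is) @
     ydivide (snd (ysplit s (is ! ?m))) (map (\<lambda>j. j - is ! ?m) (drop (?m + 1) is))"
    using assms ydivide_append_Cons[of "take ?m is" "is ! ?m" "drop (?m + 1) is" s]
    by (simp add: sorted_seqs_def)
  then show ?thesis
    using assms by (simp add: mult_term_def sorted_seqs_def)
qed

text \<open>The compatibility of product and coproduct of \<open>\<Y>Sym\<close> on basis elements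
  (\<open>ysplit_mult_term\<close>) is proved by induction on \<open>t\<close>; the next two lemmas are its inductive
  cases, according to whether leaf \<open>k2\<close> of \<open>Br ta tb\<close> lies in \<open>ta\<close> or in \<open>tb\<close>.\<close>

lemma ysplit_mult_term_Br_left:
  assumes k: "k1 \<le> bsize s" "k2 \<le> bsize ta"
    and is0: "is0 \<in> sorted_seqs k1 k2"
    and is1: "is1 \<in> sorted_seqs (bsize s - k1) (bsize ta + bsize tb + 1 - k2)"
    and IH: "\<And>c js. k1 \<le> bsize c \<Longrightarrow> js \<in> sorted_seqs (bsize c - k1) (bsize ta - k2) \<Longrightarrow>
      ysplit (mult_term c ta (is0 @ map (\<lambda>i. i + k1) js)) (k1 + k2) =
      (mult_term (fst (ysplit c k1)) (fst (ysplit ta k2)) is0,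
       mult_term (snd (ysplit c k1)) (snd (ysplit ta k2)) js)"
  shows "ysplit (mult_term s (Br ta tb) (is0 @ map (\<lambda>i. i + k1) is1)) (k1 + k2) =
    (mult_term (fst (ysplit s k1)) (fst (ysplit (Br ta tb) k2)) is0,
     mult_term (snd (ysplit s k1)) (snd (ysplit (Br ta tb) k2)) is1)"
proof -
  let ?m = "bsize ta"
  define "is" where "is = is0 @ map (\<lambda>i. i + k1) is1"
  define i where "i = is ! ?m"
  let ?s1 = "snd (ysplit s k1)"
  have len: "length is0 = k2" "length is1 = ?m + bsize tb + 1 - k2"
    using is0 is1 by (auto simp: sorted_seqs_def)
  have "is \<in> sorted_seqs (bsize s) (?m + bsize tb + 1)"
    unfolding is_def using sorted_seqs_append[OF is0 is1] k by simp
  then have i_le: "i \<le> bsize s" and mt: "mult_term s (Br ta tb) is =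
      Br (mult_term (fst (ysplit s i)) ta (take ?m is))
         (mult_term (snd (ysplit s i)) tb (map (\<lambda>j. j - i) (drop (?m + 1) is)))"
    unfolding i_def using mult_term_Br[of "is" s ta tb] by (auto intro: sorted_seqs_nth)
  have i: "i = is1 ! (?m - k2) + k1" and k1_i: "k1 \<le> i"
    using k len unfolding i_def is_def by (auto simp: nth_append)
  have take_is: "take ?m is = is0 @ map (\<lambda>i. i + k1) (take (?m - k2) is1)"
    using k len unfolding is_def by (simp add: take_map)
  have drop_is:
    "map (\<lambda>j. j - i) (drop (?m + 1) is) = map (\<lambda>j. j - (i - k1)) (drop (?m - k2 + 1) is1)"
    using k len k1_i unfolding is_def by (simp add: drop_map Suc_diff_le)
  obtain ta0 ta1 where ta: "ysplit ta k2 = (ta0, ta1)" by fastforce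
  have ta1: "bsize ta1 = ?m - k2"
    using bsize_ysplit(2)[OF k(2)] ta by simp
  have s1: "bsize ?s1 = bsize s - k1"
    using bsize_ysplit(2)[OF k(1)] by simp
  have "take (?m - k2) is1 \<in> sorted_seqs (i - k1) (?m - k2)"
    using sorted_seqs_take[OF is1, of "?m - k2"] len k i by simp
  then have left: "ysplit (mult_term (fst (ysplit s i)) ta (take ?m is)) (k1 + k2) =
     (mult_term (fst (ysplit s k1)) ta0 is0,
      mult_term (fst (ysplit ?s1 (i - k1))) ta1 (take (?m - k2) is1))"
    unfolding take_is using IH[of "fst (ysplit s i)"] bsize_ysplit(1)[OF i_le] k1_i ta
      ysplit_ysplit[OF k1_i i_le] by simp
  have "is1 \<in> sorted_seqs (bsize ?s1) (bsize ta1 + bsize tb + 1)"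
    using is1 s1 ta1 k by (simp add: Suc_diff_le)
  then have "mult_term ?s1 (Br ta1 tb) is1 =
      Br (mult_term (fst (ysplit ?s1 (i - k1))) ta1 (take (?m - k2) is1))
         (mult_term (snd (ysplit s i)) tb (map (\<lambda>j. j - (i - k1)) (drop (?m - k2 + 1) is1)))"
    using mult_term_Br[of is1 ?s1 ta1 tb] ta1 i ysplit_ysplit[OF k1_i i_le] by simp
  moreover have "bsize (mult_term (fst (ysplit s i)) ta (take ?m is)) = i + ?m"
    using bsize_mult_term sorted_seqs_take[of "is" "bsize s"] bsize_ysplit(1)[OF i_le]
      \<open>is \<in> sorted_seqs (bsize s) (?m + bsize tb + 1)\<close> unfolding i_def by simp
  ultimately show ?thesis
    unfolding is_def[symmetric] mt using left k k1_i ta drop_is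
    by (simp split: prod.splits)
qed

lemma ysplit_mult_term_Br_right:
  assumes k: "k1 \<le> bsize s" "bsize ta < k2" "k2 \<le> bsize ta + bsize tb + 1"
    and is0: "is0 \<in> sorted_seqs k1 k2"
    and is1: "is1 \<in> sorted_seqs (bsize s - k1) (bsize ta + bsize tb + 1 - k2)"
    and IH: "\<And>d k1' js. k1' \<le> bsize d \<Longrightarrow> js \<in> sorted_seqs k1' (k2 - bsize ta - 1) \<Longrightarrow>
      is1 \<in> sorted_seqs (bsize d - k1') (bsize tb - (k2 - bsize ta - 1)) \<Longrightarrow>
      ysplit (mult_term d tb (js @ map (\<lambda>i. i + k1') is1)) (k1' + (k2 - bsize ta - 1)) =
      (mult_term (fst (ysplit d k1')) (fst (ysplit tb (k2 - bsize ta - 1))) js,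
       mult_term (snd (ysplit d k1')) (snd (ysplit tb (k2 - bsize ta - 1))) is1)"
  shows "ysplit (mult_term s (Br ta tb) (is0 @ map (\<lambda>i. i + k1) is1)) (k1 + k2) =
    (mult_term (fst (ysplit s k1)) (fst (ysplit (Br ta tb) k2)) is0,
     mult_term (snd (ysplit s k1)) (snd (ysplit (Br ta tb) k2)) is1)"
proof -
  let ?m = "bsize ta"
  let ?k2 = "k2 - ?m - 1"
  define "is" where "is = is0 @ map (\<lambda>i. i + k1) is1"
  define i where "i = is ! ?m"
  let ?s0 = "fst (ysplit s k1)"
  let ?d = "snd (ysplit s i)"
  let ?is0 = "map (\<lambda>j. j - i) (drop (?m + 1) is0)"
  have len: "length is0 = k2"
    using is0 by (simp add: sorted_seqs_def)
  have "is \<in> sorted_seqs (bsize s) (?m + bsize tb + 1)"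
    unfolding is_def using sorted_seqs_append[OF is0 is1] k by simp
  then have i_le: "i \<le> bsize s" and mt: "mult_term s (Br ta tb) is =
      Br (mult_term (fst (ysplit s i)) ta (take ?m is))
         (mult_term ?d tb (map (\<lambda>j. j - i) (drop (?m + 1) is)))"
    unfolding i_def using mult_term_Br[of "is" s ta tb] by (auto intro: sorted_seqs_nth)
  have i: "i = is0 ! ?m" and i_k1: "i \<le> k1"
    using k len sorted_seqs_nth[OF is0, of ?m] unfolding i_def is_def by (auto simp: nth_append)
  have take_is: "take ?m is = take ?m is0"
    using k len unfolding is_def by simp
  have drop_is: "map (\<lambda>j. j - i) (drop (?m + 1) is) = ?is0 @ map (\<lambda>j. j + (k1 - i)) is1"
    using k len i_k1 unfolding is_def by auto
  obtain tb0 tb1 where tb: "ysplit tb ?k2 = (tb0, tb1)" by fastforce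
  have tb0: "bsize tb0 = ?k2"
    using bsize_ysplit(1)[of ?k2 tb] k tb by simp
  have d: "bsize ?d = bsize s - i"
    using bsize_ysplit(2)[OF i_le] .
  have "?is0 \<in> sorted_seqs (k1 - i) ?k2"
    using sorted_seqs_drop[OF is0, of ?m] k i by simp
  moreover have "is1 \<in> sorted_seqs (bsize ?d - (k1 - i)) (bsize tb - ?k2)"
    using is1 d k i_k1 by (simp add: sorted_seqs_def)
  ultimately have right:
    "ysplit (mult_term ?d tb (?is0 @ map (\<lambda>j. j + (k1 - i)) is1)) (k1 - i + ?k2) =
     (mult_term (snd (ysplit ?s0 i)) tb0 ?is0, mult_term (snd (ysplit s k1)) tb1 is1)"
    using IH[of "k1 - i" ?d ?is0] d k i_k1 tb ysplit_ysplit[OF i_k1 k(1)] by simp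
  have "is0 \<in> sorted_seqs (bsize ?s0) (?m + bsize tb0 + 1)"
    using is0 bsize_ysplit(1)[OF k(1)] tb0 k by simp
  then have "mult_term ?s0 (Br ta tb0) is0 =
      Br (mult_term (fst (ysplit s i)) ta (take ?m is0)) (mult_term (snd (ysplit ?s0 i)) tb0 ?is0)"
    using mult_term_Br[of is0 ?s0 ta tb0] i ysplit_ysplit[OF i_k1 k(1)] by simp
  moreover have "bsize (mult_term (fst (ysplit s i)) ta (take ?m is)) = i + ?m"
    using bsize_mult_term sorted_seqs_take[of "is" "bsize s"] bsize_ysplit(1)[OF i_le]
      \<open>is \<in> sorted_seqs (bsize s) (?m + bsize tb + 1)\<close> unfolding i_def by simp
  moreover have "k1 + k2 - (i + ?m) - 1 = k1 - i + ?k2"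
    using k i_k1 by simp
  ultimately show ?thesis
    unfolding is_def[symmetric] mt using right k i_k1 tb take_is drop_is
    by (simp split: prod.splits)
qed

lemma ysplit_mult_term:
  assumes "k1 \<le> bsize s" "k2 \<le> bsize t" "is0 \<in> sorted_seqs k1 k2"
    "is1 \<in> sorted_seqs (bsize s - k1) (bsize t - k2)"
  shows "ysplit (mult_term s t (is0 @ map (\<lambda>i. i + k1) is1)) (k1 + k2) =
    (mult_term (fst (ysplit s k1)) (fst (ysplit t k2)) is0,
     mult_term (snd (ysplit s k1)) (snd (ysplit t k2)) is1)"
  using assms
proof (induction t arbitrary: s k1 k2 is0 is1)
  case Leaf
  then show ?case by (simp add: sorted_seqs_def)
next
  case (Br ta tb)
  show ?case
  proof (cases "k2 \<le> bsize ta")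
    case True
    with Br.prems show ?thesis
      by (intro ysplit_mult_term_Br_left) (auto intro: Br.IH(1))
  next
    case False
    show ?thesis
    proof (rule ysplit_mult_term_Br_right)
      fix d k1' js
      assume "k1' \<le> bsize d" "js \<in> sorted_seqs k1' (k2 - bsize ta - 1)"
        "is1 \<in> sorted_seqs (bsize d - k1') (bsize tb - (k2 - bsize ta - 1))"
      moreover have "k2 - bsize ta - 1 \<le> bsize tb"
        using Br.prems by simp
      ultimately show
        "ysplit (mult_term d tb (js @ map (\<lambda>i. i + k1') is1)) (k1' + (k2 - bsize ta - 1)) =
        (mult_term (fst (ysplit d k1')) (fst (ysplit tb (k2 - bsize ta - 1))) js,
         mult_term (snd (ysplit d k1')) (snd (ysplit tb (k2 - bsize ta - 1))) is1)"
        by (blast intro: Br.IH(2))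
    qed (use False Br.prems in auto)
  qed
qed

lemma sorted_cut_point:
  assumes srt: "sorted is" and len: "length is = Q" and bnd: "\<forall>x\<in>set is. x \<le> P"
    and k: "k \<le> P + Q"
  obtains j where "j \<le> Q" "j \<le> k" "k - j \<le> P"
    "\<forall>x\<in>set (take j is). x \<le> k - j" "\<forall>x\<in>set (drop j is). k - j \<le> x"
proof
  have mono: "is ! p \<le> is ! q" if "p \<le> q" "q < Q" for p q
    using sorted_nth_mono[OF srt that(1)] that len by simp
  txt \<open>\<open>p \<mapsto> is ! p + p\<close> is strictly increasing; cut where it reaches \<open>k\<close>.\<close>
  define j where "j = (LEAST j. j = Q \<or> k \<le> is ! j + j)"
  show j_Q: "j \<le> Q"
    unfolding j_def by (rule Least_le) simp
  have j_cut: "j = Q \<or> k \<le> is ! j + j"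
    unfolding j_def by (rule LeastI[of _ Q]) simp
  have below: "is ! p + p < k" if "p < j" for p
    using not_less_Least[of p "\<lambda>j. j = Q \<or> k \<le> is ! j + j"] that j_Q unfolding j_def by auto
  show "j \<le> k"
    using below[of k] by (cases "j \<le> k") auto
  show "\<forall>x\<in>set (take j is). x \<le> k - j"
  proof
    fix x assume "x \<in> set (take j is)"
    then obtain p where p: "p < j" "x = is ! p"
      by (auto simp: in_set_conv_nth)
    then have "is ! p \<le> is ! (j - 1)"
      by (intro mono) (use j_Q in auto)
    with below[of "j - 1"] p show "x \<le> k - j"
      by simp
  qed
  show "\<forall>x\<in>set (drop j is). k - j \<le> x"
  proof
    fix x assume "x \<in> set (drop j is)"
    then obtain p where "p < length (drop j is)" "drop j is ! p = x"
      by (auto simp: in_set_conv_nth)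
    then have "j + p < Q" "x = is ! (j + p)"
      using len by auto
    then show "k - j \<le> x"
      using j_cut mono[of j "j + p"] by auto
  qed
  show "k - j \<le> P"
  proof (cases "j < Q")
    case True
    then have "is ! j \<le> P"
      using bnd len by simp
    with True j_cut show ?thesis
      by linarith
  qed (use j_Q k in auto)
qed

lemma sorted_seqs_split_exists:
  assumes "is \<in> sorted_seqs P Q" "k \<le> P + Q"
  obtains i j is0 is1 where "i \<le> P" "j \<le> Q" "is0 \<in> sorted_seqs i j"
    "is1 \<in> sorted_seqs (P - i) (Q - j)" "is = is0 @ map (\<lambda>x. x + i) is1" "k = i + j"
proof -
  have srt: "sorted is" and len: "length is = Q" and bnd: "\<forall>x\<in>set is. x \<le> P"
    using assms(1) by (auto simp: sorted_seqs_def)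
  obtain j where j: "j \<le> Q" "j \<le> k" "k - j \<le> P"
    "\<forall>x\<in>set (take j is). x \<le> k - j" "\<forall>x\<in>set (drop j is). k - j \<le> x"
    using sorted_cut_point[OF srt len bnd assms(2)] .
  have "take j is \<in> sorted_seqs (k - j) j"
    using j len srt by (auto simp: sorted_seqs_def sorted_wrt_take)
  moreover have "map (\<lambda>x. x - (k - j)) (drop j is) \<in> sorted_seqs (P - (k - j)) (Q - j)"
    using len bnd srt
    by (auto simp: sorted_seqs_def intro!: sorted_map_diff sorted_wrt_drop diff_le_mono
        dest: in_set_dropD)
  moreover have "is = take j is @ map (\<lambda>x. x + (k - j)) (map (\<lambda>x. x - (k - j)) (drop j is))"
    using j(5) by (simp add: map_idI)
  ultimately show ?thesis
    using that j by auto
qed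

lemma sorted_seqs_split_unique_aux:
  assumes "is0 \<in> sorted_seqs i j" "is1 \<in> sorted_seqs (P - i) (Q - j)" "is0' \<in> sorted_seqs i' j'"
    "j' \<le> Q" "i + j = i' + j'" "is0 @ map (\<lambda>x. x + i) is1 = is0' @ map (\<lambda>x. x + i') is1'"
  shows "\<not> j < j'"
proof
  assume "j < j'"
  have len: "length is0 = j" "length is1 = Q - j" "length is0' = j'"
    using assms by (auto simp: sorted_seqs_def)
  then have "is1 ! 0 + i = is0' ! j"
    using arg_cong[OF assms(6), of "\<lambda>xs. xs ! j"] \<open>j < j'\<close> assms(4) by (simp add: nth_append)
  moreover have "is0' ! j \<le> i'"
    using sorted_seqs_nth[OF assms(3)] \<open>j < j'\<close> by simp
  ultimately show False
    using assms(5) \<open>j < j'\<close> by simp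
qed

lemma sorted_seqs_split_unique:
  assumes "is0 \<in> sorted_seqs i j" "is1 \<in> sorted_seqs (P - i) (Q - j)"
    "is0' \<in> sorted_seqs i' j'" "is1' \<in> sorted_seqs (P - i') (Q - j')"
    "j \<le> Q" "j' \<le> Q" "i + j = i' + j'" "is0 @ map (\<lambda>x. x + i) is1 = is0' @ map (\<lambda>x. x + i') is1'"
  shows "i = i' \<and> j = j' \<and> is0 = is0' \<and> is1 = is1'"
proof -
  have "j = j'"
    using sorted_seqs_split_unique_aux[OF assms(1,2,3,6,7,8)]
      sorted_seqs_split_unique_aux[OF assms(3,4,1,5) assms(7)[symmetric] assms(8)[symmetric]]
    by linarith
  moreover have "length is0 = j" "length is0' = j'"
    using assms by (auto simp: sorted_seqs_def)
  ultimately show ?thesis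
    using assms(7,8) by (auto simp: inj_map_eq_map inj_on_def)
qed

lemma bij_betw_sorted_seqs_split:
  "bij_betw (\<lambda>(i, j, is0, is1). (is0 @ map (\<lambda>x. x + i) is1, i + j))
     (SIGMA i:{0..P}. SIGMA j:{0..Q}. sorted_seqs i j \<times> sorted_seqs (P - i) (Q - j))
     (sorted_seqs P Q \<times> {0..P + Q})"
proof (rule bij_betw_imageI)
  show "inj_on (\<lambda>(i, j, is0, is1). (is0 @ map (\<lambda>x. x + i) is1, i + j))
     (SIGMA i:{0..P}. SIGMA j:{0..Q}. sorted_seqs i j \<times> sorted_seqs (P - i) (Q - j))"
    by (rule inj_onI) (use sorted_seqs_split_unique in fastforce)
  show "(\<lambda>(i, j, is0, is1). (is0 @ map (\<lambda>x. x + i) is1, i + j)) `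
      (SIGMA i:{0..P}. SIGMA j:{0..Q}. sorted_seqs i j \<times> sorted_seqs (P - i) (Q - j))
    = sorted_seqs P Q \<times> {0..P + Q}"
  proof (intro equalityI subsetI)
    fix y assume "y \<in> sorted_seqs P Q \<times> {0..P + Q}"
    then obtain "is" k where y: "y = (is, k)" "is \<in> sorted_seqs P Q" "k \<le> P + Q" by auto
    from y(2,3) show "y \<in> (\<lambda>(i, j, is0, is1). (is0 @ map (\<lambda>x. x + i) is1, i + j)) `
      (SIGMA i:{0..P}. SIGMA j:{0..Q}. sorted_seqs i j \<times> sorted_seqs (P - i) (Q - j))"
      by (rule sorted_seqs_split_exists) (force simp: y(1))
  qed (auto intro!: sorted_seqs_append)
qed

definition mult_terms_below :: "btree \<Rightarrow> btree \<Rightarrow> btree \<Rightarrow> nat" where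
  "mult_terms_below u s t =
     (\<Sum>is\<in>sorted_seqs (bsize s) (bsize t). of_bool (tamari_le (mult_term s t is) u))"

text \<open>The product of \<open>LR \<otimes> LR\<close>, on coefficients with respect to the basis dual to
  \<open>F\<^sub>s \<otimes> F\<^sub>t\<close>.\<close>

definition multLR_tensor ::
  "(btree \<Rightarrow> btree \<Rightarrow> nat) \<Rightarrow> (btree \<Rightarrow> btree \<Rightarrow> nat) \<Rightarrow> btree \<Rightarrow> btree \<Rightarrow> nat" where
  "multLR_tensor F G s t = (\<Sum>i\<in>{0..bsize s}. \<Sum>j\<in>{0..bsize t}.
     F (fst (ysplit s i)) (fst (ysplit t j)) * G (snd (ysplit s i)) (snd (ysplit t j)))"

lemma DeltaLR_Phi:
  "DeltaLR (Phi x) (s, t) = (\<Sum>f\<in>supp x. x f * of_nat (mult_terms_below (phiF f) s t))"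
proof -
  have "dpair (Mdual u) (multY_basis s t) = of_nat (mult_terms_below u s t)" for u
    unfolding multY_basis_eq mult_terms_below_def Mdual_eq
    using dpair_vbasis_sum[OF finite_sorted_seqs, of _ "\<lambda>_. 1"] by simp
  then show ?thesis
    by (simp add: DeltaLR_def Phi_def dpair_lin Phi_basis_def)
qed

lemma mult_terms_below_Leaf: "mult_terms_below Leaf s t = of_bool (s = Leaf \<and> t = Leaf)"
proof (cases "s = Leaf \<and> t = Leaf")
  case False
  then have "\<not> tamari_le (mult_term s t is) Leaf" if "is \<in> sorted_seqs (bsize s) (bsize t)" for "is"
    using bsize_mult_term[OF that] by (cases s; cases t) auto
  with False show ?thesis
    by (simp add: mult_terms_below_def)
qed (simp add: mult_terms_below_def)

lemma sum_sorted_seqs_Suc_last: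
  "(\<Sum>is\<in>sorted_seqs p (Suc m). of_bool (is ! m = p \<and> P (take m is)) :: nat)
   = (\<Sum>js\<in>sorted_seqs p m. of_bool (P js))"
proof -
  have "{is \<in> sorted_seqs p (Suc m). is ! m = p} = (\<lambda>js. js @ [p]) ` sorted_seqs p m"
  proof (intro equalityI subsetI)
    fix "is" assume "is \<in> {is \<in> sorted_seqs p (Suc m). is ! m = p}"
    then have "is = take m is @ [p]" "take m is \<in> sorted_seqs p m"
      using id_take_nth_drop[of m "is"] sorted_seqs_take[of "is" p "Suc m" m]
      by (auto simp: sorted_seqs_def)
    then show "is \<in> (\<lambda>js. js @ [p]) ` sorted_seqs p m"
      by (metis image_eqI)
  qed (auto simp: sorted_seqs_def sorted_append nth_append)
  moreover have "(\<Sum>is\<in>sorted_seqs p (Suc m). of_bool (is ! m = p \<and> P (take m is)) :: nat)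
      = (\<Sum>is\<in>sorted_seqs p (Suc m). if is ! m = p then of_bool (P (take m is)) else 0)"
    by (intro sum.cong) auto
  ultimately have "(\<Sum>is\<in>sorted_seqs p (Suc m). of_bool (is ! m = p \<and> P (take m is)) :: nat)
      = (\<Sum>is\<in>(\<lambda>js. js @ [p]) ` sorted_seqs p m. of_bool (P (take m is)))"
    by (simp add: sum.inter_filter[symmetric] finite_sorted_seqs)
  also have "\<dots> = (\<Sum>js\<in>sorted_seqs p m. of_bool (P js))"
    by (subst sum.reindex) (auto simp: inj_on_def sorted_seqs_def)
  finally show ?thesis .
qed

lemma tamari_le_Br_Leaf_mult_term_iff:
  assumes "is \<in> sorted_seqs (bsize s) (bsize ta + bsize tb + 1)"
  shows "tamari_le (mult_term s (Br ta tb) is) (Br x Leaf) \<longleftrightarrow>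
    tb = Leaf \<and> is ! bsize ta = bsize s \<and> tamari_le (mult_term s ta (take (bsize ta) is)) x"
proof -
  let ?m = "bsize ta"
  let ?i = "is ! ?m"
  let ?B = "mult_term (snd (ysplit s ?i)) tb (map (\<lambda>j. j - ?i) (drop (?m + 1) is))"
  have i: "?i \<le> bsize s"
    using sorted_seqs_nth[OF assms] by simp
  have "map (\<lambda>j. j - ?i) (drop (?m + 1) is) \<in> sorted_seqs (bsize (snd (ysplit s ?i))) (bsize tb)"
    using sorted_seqs_drop[OF assms, of ?m] bsize_ysplit(2)[OF i] by simp
  then have "bsize ?B = bsize s - ?i + bsize tb"
    using bsize_mult_term bsize_ysplit(2)[OF i] by simp
  then have B: "?B = Leaf \<longleftrightarrow> tb = Leaf \<and> ?i = bsize s"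
    using i by (simp flip: bsize_eq_0_iff) linarith
  have "tamari_le (mult_term s (Br ta tb) is) (Br x Leaf) \<longleftrightarrow>
      ?B = Leaf \<and> tamari_le (mult_term (fst (ysplit s ?i)) ta (take ?m is)) x"
    by (simp add: mult_term_Br[OF assms] tamari_le_Br_Leaf_iff)
  also have "\<dots> \<longleftrightarrow> tb = Leaf \<and> ?i = bsize s \<and> tamari_le (mult_term s ta (take ?m is)) x"
    unfolding B by (auto simp: ysplit_bsize)
  finally show ?thesis .
qed

lemma mult_terms_below_Br_Leaf:
  "mult_terms_below (Br x Leaf) s t = of_bool (t = Leaf) * of_bool (tamari_le s (Br x Leaf))
     + (case t of Leaf \<Rightarrow> 0 | Br ta tb \<Rightarrow> if tb = Leaf then mult_terms_below x s ta else 0)"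
proof (cases t)
  case (Br ta tb)
  then have "mult_terms_below (Br x Leaf) s t
      = (\<Sum>is\<in>sorted_seqs (bsize s) (Suc (bsize ta + bsize tb)). of_bool (tb = Leaf
          \<and> is ! bsize ta = bsize s \<and> tamari_le (mult_term s ta (take (bsize ta) is)) x))"
    unfolding mult_terms_below_def
    by (intro sum.cong refl) (use tamari_le_Br_Leaf_mult_term_iff in auto)
  also have "\<dots> = (if tb = Leaf then mult_terms_below x s ta else 0)"
    using sum_sorted_seqs_Suc_last[where P = "\<lambda>js. tamari_le (mult_term s ta js) x"]
    by (simp add: mult_terms_below_def)
  finally show ?thesis
    using Br by simp
qed (simp add: mult_terms_below_def)

lemma sum_SIGMA_SIGMA_Times:
  assumes "finite I" "\<And>i. finite (J i)" "\<And>i j. finite (A i j)" "\<And>i j. finite (B i j)"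
  shows "(\<Sum>(i, j, a, b)\<in>(SIGMA i:I. SIGMA j:J i. A i j \<times> B i j). f i j a b) =
    (\<Sum>i\<in>I. \<Sum>j\<in>J i. \<Sum>a\<in>A i j. \<Sum>b\<in>B i j. f i j a b)"
proof -
  have "(\<Sum>i\<in>I. \<Sum>j\<in>J i. \<Sum>a\<in>A i j. \<Sum>b\<in>B i j. f i j a b) =
        (\<Sum>i\<in>I. \<Sum>j\<in>J i. \<Sum>(a, b)\<in>A i j \<times> B i j. f i j a b)"
    by (simp add: sum.cartesian_product)
  also have "\<dots> = (\<Sum>i\<in>I. \<Sum>(j, p)\<in>(SIGMA j:J i. A i j \<times> B i j). case p of (a, b) \<Rightarrow> f i j a b)"
    using assms by (subst sum.Sigma) auto
  also have "\<dots> = (\<Sum>(i, q)\<in>(SIGMA i:I. SIGMA j:J i. A i j \<times> B i j).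
       case q of (j, p) \<Rightarrow> case p of (a, b) \<Rightarrow> f i j a b)"
    using assms by (subst sum.Sigma) (auto intro!: finite_SigmaI)
  finally show ?thesis
    by (simp add: case_prod_beta')
qed

lemma mult_terms_below_under:
  "mult_terms_below (under a b) = multLR_tensor (mult_terms_below a) (mult_terms_below b)"
proof (intro ext)
  fix s t
  let ?P = "bsize s" and ?Q = "bsize t"
  let ?D = "SIGMA i:{0..?P}. SIGMA j:{0..?Q}. sorted_seqs i j \<times> sorted_seqs (?P - i) (?Q - j)"
  let ?h = "\<lambda>(i, j, is0, is1). (is0 @ map (\<lambda>x. x + i) is1, i + j)"
  define G where "G = (\<lambda>(is, k). of_bool (tamari_le (fst (ysplit (mult_term s t is) k)) a)
    * of_bool (tamari_le (snd (ysplit (mult_term s t is) k)) b) :: nat)"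
  have "mult_terms_below (under a b) s t = (\<Sum>y\<in>sorted_seqs ?P ?Q \<times> {0..?P + ?Q}. G y)"
    unfolding mult_terms_below_def sum.cartesian_product[symmetric] G_def
    by (intro sum.cong refl) (simp add: of_bool_tamari_le_under bsize_mult_term)
  also have "\<dots> = (\<Sum>y\<in>?D. G (?h y))"
    by (rule sum.reindex_bij_betw[OF bij_betw_sorted_seqs_split, symmetric])
  also have "\<dots> = (\<Sum>(i, j, is0, is1)\<in>?D.
      of_bool (tamari_le (mult_term (fst (ysplit s i)) (fst (ysplit t j)) is0) a) *
      of_bool (tamari_le (mult_term (snd (ysplit s i)) (snd (ysplit t j)) is1) b))"
    unfolding G_def by (intro sum.cong refl) (auto simp: ysplit_mult_term)
  also have "\<dots> = (\<Sum>i\<in>{0..?P}. \<Sum>j\<in>{0..?Q}. \<Sum>is0\<in>sorted_seqs i j. \<Sum>is1\<in>sorted_seqs (?P - i) (?Q - j).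
      of_bool (tamari_le (mult_term (fst (ysplit s i)) (fst (ysplit t j)) is0) a) *
      of_bool (tamari_le (mult_term (snd (ysplit s i)) (snd (ysplit t j)) is1) b))"
    by (rule sum_SIGMA_SIGMA_Times) (simp_all add: finite_sorted_seqs)
  also have "\<dots> = multLR_tensor (mult_terms_below a) (mult_terms_below b) s t"
    unfolding multLR_tensor_def mult_terms_below_def
    by (intro sum.cong refl)
      (simp add: sum_product bsize_ysplit
        del: sum_of_bool_eq sum_mult_of_bool_eq sum_of_bool_mult_eq)
  finally show "mult_terms_below (under a b) s t = \<dots>" .
qed

section \<open>Counting admissible cuts\<close>

text \<open>Admissibility relative to the node numbering of \<open>fnodes k\<close>, where the trees of a forest
  are numbered from \<open>k\<close>: this lets the cuts of \<open>T # Ts\<close> be described by those of \<open>T\<close> and of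
  \<open>Ts\<close>.\<close>

definition tree_admissible :: "ptree \<Rightarrow> nat list set \<Rightarrow> bool" where
  "tree_admissible T R \<longleftrightarrow> R \<subseteq> tnodes T \<and> (\<forall>p\<in>R. \<forall>q. p @ q \<in> tnodes T \<longrightarrow> p @ q \<in> R)"

definition forest_admissible :: "nat \<Rightarrow> forest \<Rightarrow> nat list set \<Rightarrow> bool" where
  "forest_admissible k f R \<longleftrightarrow> R \<subseteq> fnodes k f \<and> (\<forall>p\<in>R. \<forall>q. p @ q \<in> fnodes k f \<longrightarrow> p @ q \<in> R)"

definition tree_cuts_below :: "ptree \<Rightarrow> btree \<Rightarrow> btree \<Rightarrow> nat" where
  "tree_cuts_below T s t = (\<Sum>R\<in>{R. tree_admissible T R}.
     of_bool (tamari_le s (phiF (tcutpart R T))) * of_bool (tamari_le t (phiF (tremain R T))))"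

definition forest_cuts_below :: "nat \<Rightarrow> forest \<Rightarrow> btree \<Rightarrow> btree \<Rightarrow> nat" where
  "forest_cuts_below k f s t = (\<Sum>R\<in>{R. forest_admissible k f R}.
     of_bool (tamari_le s (phiF (fcutpart R k f))) * of_bool (tamari_le t (phiF (fremain R k f))))"

lemma fnodes_hd: "p \<in> fnodes k f \<Longrightarrow> p \<noteq> [] \<and> k \<le> hd p"
  using tnodes_fnodes_card(2) by blast

lemma finite_forest_admissible: "finite {R. forest_admissible k f R}"
  by (rule finite_subset[of _ "Pow (fnodes k f)"])
    (auto simp: forest_admissible_def tnodes_fnodes_card(2))

lemma admissible_eq_forest_admissible: "admissible f = forest_admissible 0 f"
  by (simp add: fun_eq_iff admissible_def forest_admissible_def nodes_def)

lemma forest_admissible_Nil: "forest_admissible k [] R \<longleftrightarrow> R = {}"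
  by (auto simp: forest_admissible_def)

lemma tree_admissible_Node:
  "{R. tree_admissible (Node cs) R} = insert (tnodes (Node cs)) {R. forest_admissible 0 cs R}"
proof (intro set_eqI iffI)
  fix R assume R: "R \<in> {R. tree_admissible (Node cs) R}"
  show "R \<in> insert (tnodes (Node cs)) {R. forest_admissible 0 cs R}"
  proof (cases "[] \<in> R")
    case True
    have "\<forall>q. [] @ q \<in> tnodes (Node cs) \<longrightarrow> [] @ q \<in> R"
      using R True unfolding tree_admissible_def by blast
    then have "R = tnodes (Node cs)"
      using R unfolding tree_admissible_def by auto
    then show ?thesis by simp
  next
    case False
    then show ?thesis
      using R unfolding tree_admissible_def forest_admissible_def by auto
  qed
next
  fix R assume "R \<in> insert (tnodes (Node cs)) {R. forest_admissible 0 cs R}"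
  moreover have "[] \<notin> R" if "forest_admissible 0 cs R"
    using that fnodes_hd unfolding forest_admissible_def by blast
  ultimately show "R \<in> {R. tree_admissible (Node cs) R}"
    unfolding tree_admissible_def forest_admissible_def by auto
qed

lemma Cons_image_Int_fnodes_Suc: "Cons k ` X \<inter> fnodes (Suc k) Ts = {}"
  using fnodes_hd by fastforce

lemma forest_admissible_Cons_union:
  assumes "tree_admissible T R1" "forest_admissible (Suc k) Ts R2"
  shows "forest_admissible k (T # Ts) (Cons k ` R1 \<union> R2)"
  unfolding forest_admissible_def
proof (intro conjI ballI allI impI)
  show "Cons k ` R1 \<union> R2 \<subseteq> fnodes k (T # Ts)"
    using assms unfolding tree_admissible_def forest_admissible_def by auto
next
  fix p q assume p: "p \<in> Cons k ` R1 \<union> R2" and pq: "p @ q \<in> fnodes k (T # Ts)"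
  show "p @ q \<in> Cons k ` R1 \<union> R2"
  proof (cases "p \<in> R2")
    case True
    then have "p \<noteq> [] \<and> Suc k \<le> hd p"
      using assms(2) fnodes_hd unfolding forest_admissible_def by blast
    then have "p @ q \<in> fnodes (Suc k) Ts"
      using pq by (cases p) auto
    then show ?thesis
      using True assms(2) unfolding forest_admissible_def by blast
  next
    case False
    then obtain p1 where p1: "p = k # p1" "p1 \<in> R1"
      using p by auto
    then have "p1 @ q \<in> tnodes T"
      using pq Cons_image_Int_fnodes_Suc[of k "{p1 @ q}" Ts] by auto
    then show ?thesis
      using assms(1) p1 unfolding tree_admissible_def by auto
  qed
qed

lemma forest_admissible_Cons_parts:
  assumes "forest_admissible k (T # Ts) R"
  shows "tree_admissible T {p. k # p \<in> R}" "forest_admissible (Suc k) Ts (R \<inter> fnodes (Suc k) Ts)"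
proof -
  have R: "R \<subseteq> Cons k ` tnodes T \<union> fnodes (Suc k) Ts"
    using assms unfolding forest_admissible_def by simp
  have "{p. k # p \<in> R} \<subseteq> tnodes T"
    using R Cons_image_Int_fnodes_Suc[of k _ Ts] by blast
  then show "tree_admissible T {p. k # p \<in> R}"
    using assms unfolding tree_admissible_def forest_admissible_def by fastforce
  show "forest_admissible (Suc k) Ts (R \<inter> fnodes (Suc k) Ts)"
    using assms unfolding forest_admissible_def by auto
qed

lemma bij_betw_forest_admissible_Cons:
  "bij_betw (\<lambda>(R1, R2). Cons k ` R1 \<union> R2)
     ({R1. tree_admissible T R1} \<times> {R2. forest_admissible (Suc k) Ts R2})
     {R. forest_admissible k (T # Ts) R}"
proof (rule bij_betw_byWitness[where f' = "\<lambda>R. ({p. k # p \<in> R}, R \<inter> fnodes (Suc k) Ts)"])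
  show "\<forall>x\<in>{R1. tree_admissible T R1} \<times> {R2. forest_admissible (Suc k) Ts R2}.
      ({p. k # p \<in> (case x of (R1, R2) \<Rightarrow> Cons k ` R1 \<union> R2)},
       (case x of (R1, R2) \<Rightarrow> Cons k ` R1 \<union> R2) \<inter> fnodes (Suc k) Ts) = x"
    using Cons_image_Int_fnodes_Suc unfolding forest_admissible_def by fast
  show "\<forall>R\<in>{R. forest_admissible k (T # Ts) R}.
      (case ({p. k # p \<in> R}, R \<inter> fnodes (Suc k) Ts) of (R1, R2) \<Rightarrow> Cons k ` R1 \<union> R2) = R"
    unfolding forest_admissible_def by auto
qed (auto intro: forest_admissible_Cons_union forest_admissible_Cons_parts)

lemma fcutpart_fremain_Cons:
  assumes "forest_admissible (Suc k) Ts R2"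
  shows "fcutpart (Cons k ` R1 \<union> R2) k (T # Ts) = tcutpart R1 T @ fcutpart R2 (Suc k) Ts"
    "fremain (Cons k ` R1 \<union> R2) k (T # Ts) = tremain R1 T @ fremain R2 (Suc k) Ts"
proof -
  have cong: "\<forall>j\<ge>k'. {p. j # p \<in> R} = {p. j # p \<in> R'} \<Longrightarrow>
      fcutpart R k' ts = fcutpart R' k' ts \<and> fremain R k' ts = fremain R' k' ts" for R R' k' ts
    by (induction ts arbitrary: k') auto
  have "{p. k # p \<in> Cons k ` R1 \<union> R2} = R1"
    using assms fnodes_hd unfolding forest_admissible_def by force
  moreover have "\<forall>j\<ge>Suc k. {p. j # p \<in> Cons k ` R1 \<union> R2} = {p. j # p \<in> R2}"
    by auto
  ultimately show "fcutpart (Cons k ` R1 \<union> R2) k (T # Ts) = tcutpart R1 T @ fcutpart R2 (Suc k) Ts"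
    "fremain (Cons k ` R1 \<union> R2) k (T # Ts) = tremain R1 T @ fremain R2 (Suc k) Ts"
    using cong by simp_all
qed

lemma forest_cuts_below_Nil: "forest_cuts_below k [] s t = of_bool (s = Leaf \<and> t = Leaf)"
  by (simp add: forest_cuts_below_def forest_admissible_Nil)

lemma tree_cuts_below_Node:
  "tree_cuts_below (Node cs) s t = of_bool (t = Leaf) * of_bool (tamari_le s (Br (phiF cs) Leaf))
     + (case t of Leaf \<Rightarrow> 0 | Br ta tb \<Rightarrow> if tb = Leaf then forest_cuts_below 0 cs s ta else 0)"
proof -
  define g :: "nat list set \<Rightarrow> nat" where "g R = of_bool (tamari_le s (phiF (tcutpart R (Node cs))))
    * of_bool (tamari_le t (phiF (tremain R (Node cs))))" for R
  have "tree_cuts_below (Node cs) s t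
      = g (tnodes (Node cs)) + (\<Sum>R\<in>{R. forest_admissible 0 cs R}. g R)"
    unfolding tree_cuts_below_def tree_admissible_Node g_def
    by (rule sum.insert[OF finite_forest_admissible])
      (use fnodes_hd in \<open>auto simp: forest_admissible_def\<close>)
  moreover have
    "g (tnodes (Node cs)) = of_bool (t = Leaf) * of_bool (tamari_le s (Br (phiF cs) Leaf))"
    by (simp add: g_def)
  moreover have "g R = of_bool (tamari_le s (phiF (fcutpart R 0 cs)))
      * of_bool (tamari_le t (Br (phiF (fremain R 0 cs)) Leaf))" if "forest_admissible 0 cs R" for R
    using that fnodes_hd unfolding g_def forest_admissible_def by auto
  moreover have "(\<Sum>R\<in>{R. forest_admissible 0 cs R}. of_bool (tamari_le s (phiF (fcutpart R 0 cs)))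
      * of_bool (tamari_le t (Br (phiF (fremain R 0 cs)) Leaf)))
    = (case t of Leaf \<Rightarrow> 0 | Br ta tb \<Rightarrow> if tb = Leaf then forest_cuts_below 0 cs s ta else 0)"
    unfolding forest_cuts_below_def
    by (cases t) (auto simp: tamari_le_Br_Leaf_iff intro!: sum.neutral)
  ultimately show ?thesis
    by simp
qed

lemma forest_cuts_below_Cons:
  "forest_cuts_below k (T # Ts) = multLR_tensor (tree_cuts_below T) (forest_cuts_below (Suc k) Ts)"
proof (intro ext)
  fix s t
  let ?A = "{R1. tree_admissible T R1}" and ?B = "{R2. forest_admissible (Suc k) Ts R2}"
  let ?a = "\<lambda>R1 i j. of_bool (tamari_le (fst (ysplit s i)) (phiF (tcutpart R1 T)))
    * of_bool (tamari_le (fst (ysplit t j)) (phiF (tremain R1 T))) :: nat"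
  let ?b = "\<lambda>R2 i j. of_bool (tamari_le (snd (ysplit s i)) (phiF (fcutpart R2 (Suc k) Ts)))
    * of_bool (tamari_le (snd (ysplit t j)) (phiF (fremain R2 (Suc k) Ts))) :: nat"
  have "forest_cuts_below k (T # Ts) s t = (\<Sum>(R1, R2)\<in>?A \<times> ?B.
      of_bool (tamari_le s (phiF (fcutpart (Cons k ` R1 \<union> R2) k (T # Ts))))
    * of_bool (tamari_le t (phiF (fremain (Cons k ` R1 \<union> R2) k (T # Ts)))))"
    unfolding forest_cuts_below_def
    by (subst sum.reindex_bij_betw[OF bij_betw_forest_admissible_Cons, symmetric])
      (simp add: case_prod_beta')
  also have "\<dots> = (\<Sum>(R1, R2)\<in>?A \<times> ?B.
      of_bool (tamari_le s (under (phiF (tcutpart R1 T)) (phiF (fcutpart R2 (Suc k) Ts))))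
    * of_bool (tamari_le t (under (phiF (tremain R1 T)) (phiF (fremain R2 (Suc k) Ts)))))"
    by (intro sum.cong refl) (clarsimp simp only: fcutpart_fremain_Cons phiF_append mem_Collect_eq)
  also have "\<dots> = (\<Sum>x\<in>?A \<times> ?B. \<Sum>i\<in>{0..bsize s}. \<Sum>j\<in>{0..bsize t}. ?a (fst x) i j * ?b (snd x) i j)"
    unfolding of_bool_tamari_le_under sum_product
    by (intro sum.cong refl) (auto simp: ac_simps)
  also have "\<dots> = (\<Sum>i\<in>{0..bsize s}. \<Sum>j\<in>{0..bsize t}. \<Sum>x\<in>?A \<times> ?B. ?a (fst x) i j * ?b (snd x) i j)"
    by (subst sum.swap) (subst sum.swap, rule refl)
  also have "\<dots> = (\<Sum>i\<in>{0..bsize s}. \<Sum>j\<in>{0..bsize t}. (\<Sum>R1\<in>?A. ?a R1 i j) * (\<Sum>R2\<in>?B. ?b R2 i j))"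
    unfolding sum_product by (simp add: sum.cartesian_product case_prod_beta')
  also have "\<dots> = multLR_tensor (tree_cuts_below T) (forest_cuts_below (Suc k) Ts) s t"
    by (simp add: multLR_tensor_def tree_cuts_below_def forest_cuts_below_def)
  finally show "forest_cuts_below k (T # Ts) s t = \<dots>" .
qed

lemma forest_cuts_below_eq_mult_terms_below:
  "forest_cuts_below k f = mult_terms_below (phiF f)"
proof (induction f arbitrary: k rule: measure_induct_rule[of "size_list size"])
  case (less f)
  show ?case
  proof (cases f)
    case Nil
    then show ?thesis
      by (simp add: fun_eq_iff forest_cuts_below_Nil mult_terms_below_Leaf)
  next
    case (Cons T Ts)
    obtain cs where T: "T = Node cs" by (cases T)
    have "tree_cuts_below T = mult_terms_below (phiT T)"
      using less[of cs] Cons T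
      by (simp add: fun_eq_iff tree_cuts_below_Node mult_terms_below_Br_Leaf split: btree.split)
    then show ?thesis
      using less[of Ts] Cons
      by (simp add: forest_cuts_below_Cons mult_terms_below_under)
  qed
qed

section \<open>The coproduct\<close>

lemma fsupp_DeltaN_basis: "fsupp (DeltaN_basis f)"
proof -
  have "supp (DeltaN_basis f) \<subseteq> (\<lambda>R. (fcutpart R 0 f, fremain R 0 f)) ` {R. admissible f R}"
    by (auto simp: DeltaN_basis_def vbasis_def elim: sum.not_neutral_contains_not_neutral
        split: if_splits)
  then show ?thesis
    unfolding fsupp_def admissible_eq_forest_admissible
    by (rule finite_subset) (simp add: finite_forest_admissible)
qed

lemma tensor_map_Phi_DeltaN:
  assumes "fsupp x"
  shows "tensor_map Phi_basis Phi_basis (DeltaN x) (s, t)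
    = (\<Sum>f\<in>supp x. x f * of_nat (forest_cuts_below 0 f s t))"
proof -
  have "tensor_map Phi_basis Phi_basis (DeltaN_basis f) (s, t) = (\<Sum>R\<in>{R. forest_admissible 0 f R}.
      (\<lambda>(a, b) (c, d). Phi_basis a c * Phi_basis b d) (fcutpart R 0 f, fremain R 0 f) (s, t))" for f
    unfolding tensor_map_def DeltaN_basis_def admissible_eq_forest_admissible
    by (rule lin_vbasis_sum[OF finite_forest_admissible, where w = "\<lambda>_. 1", simplified])
  then have
    "tensor_map Phi_basis Phi_basis (DeltaN_basis f) (s, t) = of_nat (forest_cuts_below 0 f s t)"
    for f
    by (simp add: forest_cuts_below_def Phi_basis_def Mdual_eq)
  then show ?thesis
    unfolding DeltaN_def tensor_map_def lin_lin[OF assms fsupp_DeltaN_basis]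
    by (simp flip: tensor_map_def)
qed

lemma Phi_comult:
  assumes "fsupp x"
  shows "tensor_map Phi_basis Phi_basis (DeltaN x) = DeltaLR (Phi x)"
proof
  fix p :: "btree \<times> btree"
  show "tensor_map Phi_basis Phi_basis (DeltaN x) p = DeltaLR (Phi x) p"
    by (cases p) (simp add: tensor_map_Phi_DeltaN[OF assms] DeltaLR_Phi
        forest_cuts_below_eq_mult_terms_below)
qed

theorem theorem8p10:
  shows "bij_betw Phi {x. fsupp x} {\<xi>. fsupp \<xi>}
    \<and> (\<forall>x n. fsupp x \<longrightarrow> (\<forall>f. x f \<noteq> 0 \<longrightarrow> fdeg f = n) \<longrightarrow>
              (\<forall>t. Phi x t \<noteq> 0 \<longrightarrow> bsize t = n))
    \<and> (\<forall>x y. fsupp x \<longrightarrow> fsupp y \<longrightarrow> Phi (multN x y) = multLR (Phi x) (Phi y))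
    \<and> Phi unitN = unitLR
    \<and> (\<forall>x. fsupp x \<longrightarrow> tensor_map Phi_basis Phi_basis (DeltaN x) = DeltaLR (Phi x))
    \<and> (\<forall>x. fsupp x \<longrightarrow> counitLR (Phi x) = counitN x)"
  using bij_betw_Phi Phi_graded Phi_mult Phi_unit Phi_comult Phi_counit by blast

end
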